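(* Two words in the letters $\sigma_i,\sigma_i^{-1},x_i$ represent the same element of $SB_n$ if and only if their Garside left normal forms are identical; likewise, if and only if their Garside right normal forms are identical.
   Context: Fix $n\ge 2$. The singular braid monoid $SB_n$ is the monoid with generators $\sigma_i,\sigma_i^{-1},x_i$ ($i=1,\dots,n-1$) and relations: $\sigma_i\sigma_j=\sigma_j\sigma_i$ and $x_ix_j=x_jx_i$ if $|i-j|>1$; $x_i\sigma_j=\sigma_jx_i$ if $|i-j|\ne1$; $\sigma_i\sigma_{i+1}\sigma_i=\sigma_{i+1}\sigma_i\sigma_{i+1}$; $\sigma_i\sigma_{i+1}x_i=x_{i+1}\sigma_i\sigma_{i+1}$; $\sigma_{i+1}\sigma_ix_{i+1}=x_i\sigma_{i+1}\sigma_i$; $\sigma_i\sigma_i^{-1}=\sigma_i^{-1}\sigma_i=1$. $SB_n^+$ has generators $\sigma_i,x_i$ and all relations but the last; for positive words (words in $\sigma_i,x_i$) $A\doteq B$ means equality in $SB_n^+$. $\Delta\equiv\sigma_1\cdots\sigma_{n-1}\,\sigma_1\cdots\sigma_{n-2}\cdots\sigma_1\sigma_2\,\sigma_1$. Order positive words lexicographically with $\sigma_1<\cdots<\sigma_{n-1}<x_1<\cdots<x_{n-1}$; the base of a positive word is the lexicographically smallest positive word positively equal to it. The Garside left normal form of a word $W$ is the (unique) expression $W=\Delta^m\overline{A}$ in $SB_n$ with $m\in\mathbb Z$ and $\overline{A}$ a positive word equal to its own base and not positively equal to $\Delta Z$ for any positive $Z$. The Garside right normal form is the (unique) expression $W=\overline{A}\Delta^m$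 with $m\in\mathbb Z$ and $\overline{A}$ a positive word equal to its own base and not positively equal to $Z\Delta$ for any positive $Z$. *)

theory Defs
  imports Main
begin

text \<open>Letters: Sg i = sigma_i, Si i = sigma_i^{-1}, Xg i = x_i.\<close>
datatype gen = Sg nat | Si nat | Xg nat

type_synonym word = "gen list"

fun gidx :: "gen \<Rightarrow> nat" where
  "gidx (Sg i) = i" | "gidx (Si i) = i" | "gidx (Xg i) = i"

definition valid_word :: "nat \<Rightarrow> word \<Rightarrow> bool" where
  "valid_word n w \<longleftrightarrow> (\<forall>g\<in>set w. 1 \<le> gidx g \<and> gidx g \<le> n - 1)"

fun is_pos_letter :: "gen \<Rightarrow> bool" where
  "is_pos_letter (Si i) = False" | "is_pos_letter _ = True"

definition positive_word :: "word \<Rightarrow> bool" where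
  "positive_word w \<longleftrightarrow> (\<forall>g\<in>set w. is_pos_letter g)"

inductive prel :: "nat \<Rightarrow> word \<Rightarrow> word \<Rightarrow> bool" for n where
  comm_ss: "\<lbrakk>1 \<le> i; i \<le> n - 1; 1 \<le> j; j \<le> n - 1; i + 1 < j \<or> j + 1 < i\<rbrakk>
     \<Longrightarrow> prel n [Sg i, Sg j] [Sg j, Sg i]"
| comm_xx: "\<lbrakk>1 \<le> i; i \<le> n - 1; 1 \<le> j; j \<le> n - 1; i + 1 < j \<or> j + 1 < i\<rbrakk>
     \<Longrightarrow> prel n [Xg i, Xg j] [Xg j, Xg i]"
| comm_xs: "\<lbrakk>1 \<le> i; i \<le> n - 1; 1 \<le> j; j \<le> n - 1; i \<noteq> j + 1; j \<noteq> i + 1\<rbrakk>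
     \<Longrightarrow> prel n [Xg i, Sg j] [Sg j, Xg i]"
| braid: "\<lbrakk>1 \<le> i; i + 1 \<le> n - 1\<rbrakk>
     \<Longrightarrow> prel n [Sg i, Sg (i+1), Sg i] [Sg (i+1), Sg i, Sg (i+1)]"
| mixed1: "\<lbrakk>1 \<le> i; i + 1 \<le> n - 1\<rbrakk>
     \<Longrightarrow> prel n [Sg i, Sg (i+1), Xg i] [Xg (i+1), Sg i, Sg (i+1)]"
| mixed2: "\<lbrakk>1 \<le> i; i + 1 \<le> n - 1\<rbrakk>
     \<Longrightarrow> prel n [Sg (i+1), Sg i, Xg (i+1)] [Xg i, Sg (i+1), Sg i]"

inductive irel :: "nat \<Rightarrow> word \<Rightarrow> word \<Rightarrow> bool" for n where
  "\<lbrakk>1 \<le> i; i \<le> n - 1\<rbrakk> \<Longrightarrow> irel n [Sg i, Si i] []"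
| "\<lbrakk>1 \<le> i; i \<le> n - 1\<rbrakk> \<Longrightarrow> irel n [Si i, Sg i] []"

inductive word_cong :: "(word \<Rightarrow> word \<Rightarrow> bool) \<Rightarrow> word \<Rightarrow> word \<Rightarrow> bool" for R where
  step: "R u v \<Longrightarrow> word_cong R (p @ u @ q) (p @ v @ q)"
| refl: "word_cong R w w"
| sym: "word_cong R u v \<Longrightarrow> word_cong R v u"
| trans: "word_cong R u v \<Longrightarrow> word_cong R v w \<Longrightarrow> word_cong R u w"

definition pos_eq :: "nat \<Rightarrow> word \<Rightarrow> word \<Rightarrow> bool" where
  "pos_eq n = word_cong (prel n)"

definition sb_eq :: "nat \<Rightarrow> word \<Rightarrow> word \<Rightarrow> bool" where
  "sb_eq n = word_cong (\<lambda>u v. prel n u v \<or> irel n u v)"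

text \<open>Delta = sigma_1..sigma_{n-1} sigma_1..sigma_{n-2} ... sigma_1.\<close>
definition Delta :: "nat \<Rightarrow> word" where
  "Delta n = concat (map (\<lambda>k. map Sg [1..<Suc k]) (rev [1..<n]))"

fun ginv :: "gen \<Rightarrow> gen" where
  "ginv (Sg i) = Si i" | "ginv (Si i) = Sg i" | "ginv (Xg i) = Xg i"

definition winv :: "word \<Rightarrow> word" where
  "winv w = rev (map ginv w)"

definition Delta_pow :: "nat \<Rightarrow> int \<Rightarrow> word" where
  "Delta_pow n m = (if 0 \<le> m then concat (replicate (nat m) (Delta n))
                    else concat (replicate (nat (- m)) (winv (Delta n))))"

fun rank :: "nat \<Rightarrow> gen \<Rightarrow> nat" where
  "rank n (Sg i) = i" | "rank n (Xg i) = n - 1 + i" | "rank n (Si i) = 0"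

definition lex_less :: "nat \<Rightarrow> word \<Rightarrow> word \<Rightarrow> bool" where
  "lex_less n A B = lexordp (<) (map (rank n) A) (map (rank n) B)"

definition is_own_base :: "nat \<Rightarrow> word \<Rightarrow> bool" where
  "is_own_base n A \<longleftrightarrow> positive_word A \<and>
     (\<forall>B. positive_word B \<and> pos_eq n A B \<longrightarrow> \<not> lex_less n B A)"

definition is_left_nf :: "nat \<Rightarrow> word \<Rightarrow> int \<Rightarrow> word \<Rightarrow> bool" where
  "is_left_nf n W m A \<longleftrightarrow> valid_word n A \<and> is_own_base n A \<and>
     \<not> (\<exists>Z. positive_word Z \<and> pos_eq n A (Delta n @ Z)) \<and>
     sb_eq n W (Delta_pow n m @ A)"

definition is_right_nf :: "nat \<Rightarrow> word \<Rightarrow> word \<Rightarrow> int \<Rightarrow> bool" where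
  "is_right_nf n W A m \<longleftrightarrow> valid_word n A \<and> is_own_base n A \<and>
     \<not> (\<exists>Z. positive_word Z \<and> pos_eq n A (Z @ Delta n)) \<and>
     sb_eq n W (A @ Delta_pow n m)"

definition left_nf :: "nat \<Rightarrow> word \<Rightarrow> int \<times> word" where
  "left_nf n W = (THE p. is_left_nf n W (fst p) (snd p))"

definition right_nf :: "nat \<Rightarrow> word \<Rightarrow> word \<times> int" where
  "right_nf n W = (THE p. is_right_nf n W (fst p) (snd p))"

end

theory Submission
  imports Defs "HOL-Library.List_Lexorder"
begin

(* The complement of the presentation of SB_n^+ satisfies Dehornoy's cube condition; since
   the complement only sees equality and adjacency of indices, this is a finite check on
   five indices.  Hence word reversing is complete and SB_n^+ is left cancellative, and,
   the relations being invariant under reversing words, also right cancellative.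
   Delta is quasi-central (a Delta = Delta flip(a), with flip exchanging indices i and n - i)
   and every sigma_i divides it, so every word equals Delta^m A with A positive, and
   Delta^K W can be rewritten into a positive word, compatibly with all relations of SB_n,
   once K exceeds the number of inverse letters of W.  Thus Delta^m A = Delta^m' A' in SB_n
   gives Delta^(K+m) A = Delta^(K+m') A' in SB_n^+, and cancellation forces m = m' and A = A'
   in SB_n^+ when neither A nor A' is left divisible by Delta.  Finally, a positive class is
   finite, so it has a unique lexicographically least word, its base. *)

section \<open>Positive equality\<close>

lemma word_cong_context: "word_cong R u v \<Longrightarrow> word_cong R (p @ u @ q) (p @ v @ q)"
proof (induction rule: word_cong.induct)
  case (step u v p' q')
  then show ?case using word_cong.step[of R u v "p @ p'" "q' @ q"] by simp
qed (auto intro: word_cong.intros)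

lemma word_cong_append: "word_cong R u v \<Longrightarrow> word_cong R u' v' \<Longrightarrow> word_cong R (u @ u') (v @ v')"
  using word_cong_context[of R u v "[]" u'] word_cong_context[of R u' v' v "[]"]
  by (auto intro: word_cong.trans)

lemma word_cong_mono: "word_cong R u v \<Longrightarrow> (\<And>x y. R x y \<Longrightarrow> R' x y) \<Longrightarrow> word_cong R' u v"
  by (induction rule: word_cong.induct) (auto intro: word_cong.intros)

definition pos_step :: "nat \<Rightarrow> word \<Rightarrow> word \<Rightarrow> bool" where
  "pos_step n w w' \<longleftrightarrow> (\<exists>p u v q. (prel n u v \<or> prel n v u) \<and> w = p @ u @ q \<and> w' = p @ v @ q)"

lemma pos_steps_sym: "(pos_step n)\<^sup>*\<^sup>* u v \<Longrightarrow> (pos_step n)\<^sup>*\<^sup>* v u"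
proof (induction rule: rtranclp_induct)
  case (step y z)
  then have "pos_step n z y" unfolding pos_step_def by blast
  then show ?case using step.IH by (rule converse_rtranclp_into_rtranclp)
qed simp

lemma pos_eq_iff_pos_steps: "pos_eq n u v \<longleftrightarrow> (pos_step n)\<^sup>*\<^sup>* u v"
proof
  show "(pos_step n)\<^sup>*\<^sup>* u v" if "pos_eq n u v"
    using that unfolding pos_eq_def
  proof (induction rule: word_cong.induct)
    case (step u v p q) then show ?case unfolding pos_step_def by blast
  qed (auto intro: pos_steps_sym)
  show "pos_eq n u v" if "(pos_step n)\<^sup>*\<^sup>* u v"
    using that unfolding pos_eq_def
  proof (induction rule: rtranclp_induct)
    case (step y z)
    then have "word_cong (prel n) y z"
      unfolding pos_step_def by (auto intro: word_cong.intros)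
    then show ?case using step.IH word_cong.trans by blast
  qed (rule word_cong.refl)
qed

lemma pos_eq_refl [simp]: "pos_eq n u u"
  unfolding pos_eq_def by (rule word_cong.refl)

lemma pos_eq_sym: "pos_eq n u v \<Longrightarrow> pos_eq n v u"
  unfolding pos_eq_def by (rule word_cong.sym)

lemma pos_eq_trans [trans]: "pos_eq n u v \<Longrightarrow> pos_eq n v w \<Longrightarrow> pos_eq n u w"
  unfolding pos_eq_def by (rule word_cong.trans)

lemma pos_eq_append: "pos_eq n u v \<Longrightarrow> pos_eq n u' v' \<Longrightarrow> pos_eq n (u @ u') (v @ v')"
  unfolding pos_eq_def by (rule word_cong_append)

lemma pos_eq_append_left: "pos_eq n u v \<Longrightarrow> pos_eq n (p @ u) (p @ v)"
  using pos_eq_append[OF pos_eq_refl] by blast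

lemma pos_eq_append_right: "pos_eq n u v \<Longrightarrow> pos_eq n (u @ q) (v @ q)"
  using pos_eq_append[OF _ pos_eq_refl] by blast

lemma pos_eq_Cons: "pos_eq n u v \<Longrightarrow> pos_eq n (a # u) (a # v)"
  using pos_eq_append_left[of n u v "[a]"] by simp

lemma pos_eq_of_prel: "prel n u v \<Longrightarrow> pos_eq n u v"
  using word_cong.step[of "prel n" u v "[]" "[]"] unfolding pos_eq_def by simp

definition pos_valid :: "nat \<Rightarrow> word \<Rightarrow> bool" where
  "pos_valid n W \<longleftrightarrow> positive_word W \<and> valid_word n W"

definition pos_letter :: "nat \<Rightarrow> gen \<Rightarrow> bool" where
  "pos_letter n a \<longleftrightarrow> is_pos_letter a \<and> 1 \<le> gidx a \<and> gidx a \<le> n - 1"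

lemma pos_valid_append [simp]: "pos_valid n (u @ v) \<longleftrightarrow> pos_valid n u \<and> pos_valid n v"
  by (auto simp: pos_valid_def positive_word_def valid_word_def)

lemma pos_valid_Cons [simp]: "pos_valid n (a # u) \<longleftrightarrow> pos_letter n a \<and> pos_valid n u"
  by (auto simp: pos_valid_def pos_letter_def positive_word_def valid_word_def)

lemma pos_valid_Nil [simp]: "pos_valid n []"
  by (simp add: pos_valid_def positive_word_def valid_word_def)

lemma prel_pos_valid: "prel n u v \<Longrightarrow> pos_valid n u \<and> pos_valid n v \<and> length u = length v"
  by (induction rule: prel.induct) (auto simp: pos_valid_def positive_word_def valid_word_def)

lemma pos_eq_pos_valid_length:
  "pos_eq n u v \<Longrightarrow> (pos_valid n u \<longleftrightarrow> pos_valid n v) \<and> length u = length v"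
  unfolding pos_eq_iff_pos_steps
  by (induction rule: rtranclp_induct) (auto simp: pos_step_def dest!: prel_pos_valid)

lemma pos_eq_pos_valid: "pos_eq n u v \<Longrightarrow> pos_valid n u \<Longrightarrow> pos_valid n v"
  using pos_eq_pos_valid_length by blast

lemma pos_eq_length: "pos_eq n u v \<Longrightarrow> length u = length v"
  using pos_eq_pos_valid_length by blast

section \<open>Complements and word reversing\<close>

text \<open>Every defining relation of \<open>SB_n\<^sup>+\<close> has the shape \<open>a A = b B\<close> with distinct
  first letters \<open>a\<close>, \<open>b\<close>, and for each such pair there is at most one of them;
  \<^term>\<open>complement a b = Some A\<close> records it.\<close>

fun complement :: "gen \<Rightarrow> gen \<Rightarrow> word option" where
  "complement (Sg i) (Sg j) =
     (if i = j then None else if i = j+1 \<or> j = i+1 then Some [Sg j, Sg i] else Some [Sg j])"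
| "complement (Xg i) (Xg j) = (if i = j \<or> i = j+1 \<or> j = i+1 then None else Some [Xg j])"
| "complement (Xg i) (Sg j) = (if i = j+1 \<or> j = i+1 then Some [Sg j, Sg i] else Some [Sg j])"
| "complement (Sg j) (Xg i) = (if i = j+1 \<or> j = i+1 then Some [Sg i, Xg j] else Some [Xg i])"
| "complement _ _ = None"

lemma complement_prel:
  assumes "pos_letter n d" "pos_letter n e" "complement d e = Some A" "complement e d = Some B"
  shows "prel n (d # A) (e # B) \<or> prel n (e # B) (d # A)"
  using assms prel.braid[of _ n] prel.mixed1[of _ n] prel.mixed2[of _ n]
  by (cases d; cases e)
     (auto simp: pos_letter_def split: if_splits intro: prel.comm_ss prel.comm_xx prel.comm_xs)

lemma complement_pos_eq:
  assumes "pos_letter n d" "pos_letter n e" "complement d e = Some A" "complement e d = Some B"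
  shows "pos_eq n (d # A) (e # B)"
  using complement_prel[OF assms] pos_eq_of_prel pos_eq_sym by blast

lemma complement_pos_valid:
  "complement d e = Some A \<Longrightarrow> pos_letter n d \<Longrightarrow> pos_letter n e \<Longrightarrow> pos_valid n A"
  by (cases d; cases e) (auto simp: pos_letter_def split: if_splits)

lemma complement_length: "complement d e = Some A \<Longrightarrow> length A \<le> 2"
  by (cases d; cases e) (auto split: if_splits)

text \<open>Word reversing: \<^term>\<open>reversing N P Q = Reversed (P', Q')\<close> produces a common right
  multiple \<open>P Q' = Q P'\<close> by repeatedly replacing \<open>d\<^sup>-\<^sup>1 e\<close> with \<open>A B\<^sup>-\<^sup>1\<close> where
  \<open>d A = e B\<close> is the complement relation; \<open>N\<close> bounds the recursion depth.\<close>

datatype reversal = Reversed "word \<times> word" | Clash | Out_of_fuel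

fun reversing :: "nat \<Rightarrow> word \<Rightarrow> word \<Rightarrow> reversal" where
  "reversing 0 P Q = Out_of_fuel"
| "reversing (Suc f) [] Q = Reversed ([], Q)"
| "reversing (Suc f) (d # P) [] = Reversed (d # P, [])"
| "reversing (Suc f) (d # P) (e # Q) =
    (if d = e then reversing f P Q else
      (case (complement d e, complement e d) of
        (Some A, Some B) \<Rightarrow>
          (case reversing f P A of
            Reversed (P1, A1) \<Rightarrow>
              (case reversing f B Q of
                Reversed (B1, Q1) \<Rightarrow>
                  (case reversing f P1 Q1 of
                    Reversed (P2, Q2) \<Rightarrow> Reversed (B1 @ P2, A1 @ Q2)
                  | r \<Rightarrow> r)
              | r \<Rightarrow> r)
          | r \<Rightarrow> r)
      | _ \<Rightarrow> Clash))"

lemma reversing_self: "length P < N \<Longrightarrow> reversing N P P = Reversed ([], [])"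
proof (induction P arbitrary: N)
  case Nil then show ?case by (cases N) auto
next
  case (Cons x P) then show ?case by (cases N) auto
qed

lemma reversing_sound:
  "reversing N P Q = Reversed (P', Q') \<Longrightarrow> pos_valid n P \<Longrightarrow> pos_valid n Q \<Longrightarrow>
   pos_eq n (P @ Q') (Q @ P') \<and> pos_valid n P' \<and> pos_valid n Q'"
proof (induction N P Q arbitrary: P' Q' rule: reversing.induct)
  case (4 f d P e Q)
  show ?case
  proof (cases "d = e")
    case True
    then show ?thesis using "4.IH"(1)[OF True] "4.prems" by (auto intro: pos_eq_Cons)
  next
    case False
    obtain A B P1 A1 B1 Q1 P2 Q2 where
      A: "complement d e = Some A" and B: "complement e d = Some B" and
      r1: "reversing f P A = Reversed (P1, A1)" and r2: "reversing f B Q = Reversed (B1, Q1)" and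
      r3: "reversing f P1 Q1 = Reversed (P2, Q2)" and res: "P' = B1 @ P2" "Q' = A1 @ Q2"
      using "4.prems"(1) False
      by (auto split: option.splits reversal.splits prod.splits)
    have d: "pos_letter n d" "pos_valid n P" and e: "pos_letter n e" "pos_valid n Q"
      using "4.prems"(2,3) by auto
    have AB: "pos_valid n A" "pos_valid n B" using complement_pos_valid A B d e by blast+
    note i1 = "4.IH"(2)[OF False HOL.refl A B r1 d(2) AB(1)]
    note i2 = "4.IH"(3)[OF False HOL.refl A B r1 HOL.refl r2 AB(2) e(2)]
    note i3 = "4.IH"(4)[OF False HOL.refl A B r1 HOL.refl r2 HOL.refl r3] i1 i2
    have "pos_eq n (d # P @ A1 @ Q2) (d # A @ P1 @ Q2)"
      using i1 pos_eq_Cons pos_eq_append_right[of n "P @ A1" "A @ P1" Q2] by simp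
    also have "pos_eq n (d # A @ P1 @ Q2) (d # A @ Q1 @ P2)"
      using i3 pos_eq_append_left[of n "P1 @ Q2" "Q1 @ P2" "d # A"] by auto
    also have "pos_eq n (d # A @ Q1 @ P2) (e # B @ Q1 @ P2)"
      using pos_eq_append_right[OF complement_pos_eq[OF d(1) e(1) A B], of "Q1 @ P2"] by simp
    also have "pos_eq n (e # B @ Q1 @ P2) (e # Q @ B1 @ P2)"
      using i2 pos_eq_Cons pos_eq_append_right[of n "B @ Q1" "Q @ B1" P2] by simp
    finally show ?thesis using res i1 i2 i3 by simp
  qed
qed auto

text \<open>The complement only depends on equality and adjacency of indices, so reversing
  commutes with relabellings of indices that preserve both.\<close>

fun relabel :: "(nat \<Rightarrow> nat) \<Rightarrow> gen \<Rightarrow> gen" where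
  "relabel h (Sg i) = Sg (h i)" | "relabel h (Xg i) = Xg (h i)" | "relabel h (Si i) = Si (h i)"

definition adjacency_preserving :: "(nat \<Rightarrow> nat) \<Rightarrow> nat set \<Rightarrow> bool" where
  "adjacency_preserving h S \<longleftrightarrow>
     (\<forall>x\<in>S. \<forall>y\<in>S. (h x = h y \<longleftrightarrow> x = y) \<and> (h x = Suc (h y) \<longleftrightarrow> x = Suc y))"

definition indices :: "word \<Rightarrow> nat set" where
  "indices W = gidx ` set W"

fun map_reversal :: "(word \<Rightarrow> word) \<Rightarrow> reversal \<Rightarrow> reversal" where
  "map_reversal g (Reversed (P, Q)) = Reversed (g P, g Q)"
| "map_reversal g Clash = Clash"
| "map_reversal g Out_of_fuel = Out_of_fuel"

lemma complement_relabel: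
  assumes "adjacency_preserving h S" "gidx a \<in> S" "gidx b \<in> S"
  shows "complement (relabel h a) (relabel h b) = map_option (map (relabel h)) (complement a b)"
  using assms unfolding adjacency_preserving_def
  by (cases a; cases b) (auto simp: Suc_eq_plus1[symmetric])

lemma relabel_eq_iff:
  "adjacency_preserving h S \<Longrightarrow> gidx a \<in> S \<Longrightarrow> gidx b \<in> S \<Longrightarrow> relabel h a = relabel h b \<longleftrightarrow> a = b"
  unfolding adjacency_preserving_def by (cases a; cases b) auto

lemma complement_indices: "complement a b = Some A \<Longrightarrow> indices A \<subseteq> {gidx a, gidx b}"
  by (cases a; cases b) (auto simp: indices_def split: if_splits)

lemma indices_append [simp]: "indices (u @ v) = indices u \<union> indices v"
  by (simp add: indices_def image_Un)

lemma indices_Cons [simp]: "indices (a # u) = insert (gidx a) (indices u)"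
  by (simp add: indices_def)

lemma reversing_indices:
  "reversing N P Q = Reversed (P', Q') \<Longrightarrow> indices P' \<union> indices Q' \<subseteq> indices P \<union> indices Q"
proof (induction N P Q arbitrary: P' Q' rule: reversing.induct)
  case (4 f d P e Q)
  show ?case
  proof (cases "d = e")
    case False
    then obtain A B P1 A1 B1 Q1 P2 Q2 where
      A: "complement d e = Some A" and B: "complement e d = Some B" and
      r1: "reversing f P A = Reversed (P1, A1)" and r2: "reversing f B Q = Reversed (B1, Q1)" and
      r3: "reversing f P1 Q1 = Reversed (P2, Q2)" and res: "P' = B1 @ P2" "Q' = A1 @ Q2"
      using "4.prems" by (auto split: option.splits reversal.splits prod.splits)
    have "indices A \<union> indices B \<subseteq> {gidx d, gidx e}"
      using complement_indices[OF A] complement_indices[OF B] by blast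
    with "4.IH"(2)[OF False HOL.refl A B r1] "4.IH"(3)[OF False HOL.refl A B r1 HOL.refl r2]
      "4.IH"(4)[OF False HOL.refl A B r1 HOL.refl r2 HOL.refl r3]
    show ?thesis unfolding res by simp blast
  qed (use "4" in auto)
qed auto

lemma reversing_relabel:
  assumes h: "adjacency_preserving h S"
  shows "indices P \<subseteq> S \<Longrightarrow> indices Q \<subseteq> S \<Longrightarrow>
    reversing N (map (relabel h) P) (map (relabel h) Q) = map_reversal (map (relabel h)) (reversing N P Q)"
proof (induction N P Q rule: reversing.induct)
  case (4 f d P e Q)
  have de: "gidx d \<in> S" "gidx e \<in> S" and PQ: "indices P \<subseteq> S" "indices Q \<subseteq> S"
    using "4.prems" by (auto simp: indices_def)
  note eq = relabel_eq_iff[OF h de] and c = complement_relabel[OF h de] complement_relabel[OF h de(2,1)]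
  show ?case
  proof (cases "d = e")
    case True
    then show ?thesis using "4.IH"(1)[OF True PQ] by simp
  next
    case False
    show ?thesis
    proof (cases "complement d e" "complement e d" rule: option.exhaust[case_product option.exhaust])
      case (Some_Some A B)
      have AB: "indices A \<subseteq> S" "indices B \<subseteq> S"
        using complement_indices Some_Some de by fastforce+
      note IH2 = "4.IH"(2)[OF False HOL.refl Some_Some PQ(1) AB(1)]
      show ?thesis
      proof (cases "reversing f P A")
        case (Reversed r1)
        obtain P1 A1 where r1: "r1 = (P1, A1)" by fastforce
        have PA1: "indices P1 \<subseteq> S" "indices A1 \<subseteq> S"
          using reversing_indices[of f P A P1 A1] Reversed r1 PQ AB by auto
        note IH3 = "4.IH"(3)[OF False HOL.refl Some_Some Reversed[unfolded r1] HOL.refl AB(2) PQ(2)]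
        show ?thesis
        proof (cases "reversing f B Q")
          case (Reversed r2)
          obtain B1 Q1 where r2: "r2 = (B1, Q1)" by fastforce
          have BQ1: "indices B1 \<subseteq> S" "indices Q1 \<subseteq> S"
            using reversing_indices[of f B Q B1 Q1] Reversed r2 PQ AB by auto
          show ?thesis
            using "4.IH"(4)[OF False HOL.refl Some_Some \<open>reversing f P A = Reversed r1\<close>[unfolded r1]
                HOL.refl Reversed[unfolded r2] HOL.refl PA1(1) BQ1(2)]
              False eq c Some_Some IH2 IH3 \<open>reversing f P A = Reversed r1\<close> Reversed r1 r2
            by (cases "reversing f P1 Q1") auto
        qed (use False eq c Some_Some IH2 IH3 \<open>reversing f P A = Reversed r1\<close> r1 in simp_all)
      qed (use False eq c Some_Some IH2 in simp_all)
    qed (use False eq c in simp_all)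
  qed
qed auto

text \<open>A computable form of Dehornoy's cube condition for the letters \<open>a\<close>, \<open>b\<close>, \<open>c\<close>:
  reversing the complements of \<open>c\<close> with \<open>a\<close> and with \<open>b\<close> yields a common multiple that
  is compatible with the complement of \<open>a\<close> and \<open>b\<close>.\<close>

definition cube_condition :: "nat \<Rightarrow> gen \<Rightarrow> gen \<Rightarrow> gen \<Rightarrow> bool" where
  "cube_condition N a b c =
    (case (complement c a, complement c b, complement a c, complement b c) of
      (Some Ca, Some Cb, Some Ac, Some Bc) \<Rightarrow>
        (case reversing N Ca Cb of
          Clash \<Rightarrow> True
        | Out_of_fuel \<Rightarrow> False
        | Reversed (P', Q') \<Rightarrow>
            (case (complement a b, complement b a) of
              (Some K1, Some K2) \<Rightarrow>
                (case reversing N (Ac @ Q') K1 of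
                  Reversed (k, []) \<Rightarrow> reversing N (Bc @ P') (K2 @ k) = Reversed ([], [])
                | _ \<Rightarrow> False)
            | _ \<Rightarrow> False))
    | _ \<Rightarrow> True)"

lemma cube_condition_relabel:
  assumes h: "adjacency_preserving h {gidx a, gidx b, gidx c}"
  shows "cube_condition N (relabel h a) (relabel h b) (relabel h c) = cube_condition N a b c"
proof -
  let ?S = "{gidx a, gidx b, gidx c}" and ?g = "map (relabel h)"
  have c: "complement (relabel h x) (relabel h y) = map_option ?g (complement x y)"
    if "x \<in> {a, b, c}" "y \<in> {a, b, c}" for x y
    using complement_relabel[OF h] that by auto
  have ix: "indices X \<subseteq> ?S" if "complement x y = Some X" "x \<in> {a, b, c}" "y \<in> {a, b, c}" for x y X
    using complement_indices[OF that(1)] that by auto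
  note rv = reversing_relabel[OF h]
  have res: "indices P' \<subseteq> ?S" "indices Q' \<subseteq> ?S"
    if "reversing N P Q = Reversed (P', Q')" "indices P \<subseteq> ?S" "indices Q \<subseteq> ?S" for N P Q P' Q'
    using reversing_indices[OF that(1)] that(2,3) by auto
  have ne: "map_reversal ?g r = Reversed ([], []) \<longleftrightarrow> r = Reversed ([], [])" for r
    by (cases r) auto
  show ?thesis
  proof (cases "complement c a" "complement c b" "complement a c" "complement b c"
      rule: option.exhaust[case_product option.exhaust option.exhaust option.exhaust])
    case (Some_Some_Some_Some Ca Cb Ac Bc)
    note cs = this
    have i: "indices Ca \<subseteq> ?S" "indices Cb \<subseteq> ?S" "indices Ac \<subseteq> ?S" "indices Bc \<subseteq> ?S"
      using ix cs by auto
    show ?thesis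
    proof (cases "reversing N Ca Cb")
      case (Reversed pq)
      obtain P' Q' where pq: "pq = (P', Q')" by fastforce
      have iP: "indices P' \<subseteq> ?S" "indices Q' \<subseteq> ?S" using res Reversed pq i by auto
      show ?thesis
      proof (cases "complement a b" "complement b a" rule: option.exhaust[case_product option.exhaust])
        case (Some_Some K1 K2)
        have iK: "indices K1 \<subseteq> ?S" "indices K2 \<subseteq> ?S" using ix Some_Some by auto
        have iAQ: "indices (Ac @ Q') \<subseteq> ?S" using i iP by (auto simp: indices_def)
        show ?thesis
        proof (cases "reversing N (Ac @ Q') K1")
          case (Reversed kr)
          obtain k r where kr: "kr = (k, r)" by fastforce
          have "indices (Bc @ P') \<subseteq> ?S" "indices (K2 @ k) \<subseteq> ?S"
            using i iP iK res[of N "Ac @ Q'" K1 k r] iAQ Reversed kr by (auto simp: indices_def)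
          then show ?thesis
            using cs Some_Some c rv[OF i(1,2)] rv[OF iAQ iK(1)] rv[of "Bc @ P'" "K2 @ k"]
              \<open>reversing N Ca Cb = Reversed pq\<close> pq Reversed kr
            by (cases r) (simp_all add: cube_condition_def ne)
        qed (use cs Some_Some c rv[OF i(1,2)] rv[OF iAQ iK(1)] \<open>reversing N Ca Cb = Reversed pq\<close> pq
          in \<open>simp_all add: cube_condition_def\<close>)
      qed (use cs c rv[OF i(1,2)] Reversed pq in \<open>simp_all add: cube_condition_def\<close>)
    qed (use cs c rv[OF i(1,2)] in \<open>simp_all add: cube_condition_def\<close>)
  qed (use c in \<open>simp_all add: cube_condition_def\<close>)
qed

definition small_letters :: "gen list" where
  "small_letters = map Sg [0..<5] @ map Xg [0..<5]"

lemma cube_condition_small_letters: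
  "list_all (\<lambda>a. list_all (\<lambda>b. list_all (\<lambda>c. a = b \<or> b = c \<or> a = c \<or> cube_condition 5 a b c)
     small_letters) small_letters) small_letters"
  by code_simp

text \<open>Three indices can be moved into \<open>{0..<5}\<close> keeping their equalities and adjacencies:
  gaps larger than 2 shrink to 2.\<close>

lemma adjacency_preserving_compress_sorted:
  fixes u v w :: nat
  assumes "u \<le> v" "v \<le> w"
  shows "\<exists>h. adjacency_preserving h {u, v, w} \<and> h u < 5 \<and> h v < 5 \<and> h w < 5"
proof -
  define h where "h t = (if t \<le> v then min (t - u) 2 else min (v - u) 2 + min (t - v) 2)" for t
  have "adjacency_preserving h {u, v, w}"
    using assms unfolding adjacency_preserving_def h_def by (auto simp: min_def split: if_splits)
  moreover have "h u < 5 \<and> h v < 5 \<and> h w < 5" unfolding h_def by (auto simp: min_def)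
  ultimately show ?thesis by blast
qed

lemma adjacency_preserving_compress:
  fixes x y z :: nat
  shows "\<exists>h. adjacency_preserving h {x, y, z} \<and> h x < 5 \<and> h y < 5 \<and> h z < 5"
proof -
  have "x \<le> y \<and> y \<le> z \<or> x \<le> z \<and> z \<le> y \<or> y \<le> x \<and> x \<le> z \<or>
        y \<le> z \<and> z \<le> x \<or> z \<le> x \<and> x \<le> y \<or> z \<le> y \<and> y \<le> x"
    by linarith
  then show ?thesis
    using adjacency_preserving_compress_sorted[of x y z] adjacency_preserving_compress_sorted[of x z y]
      adjacency_preserving_compress_sorted[of y x z] adjacency_preserving_compress_sorted[of y z x]
      adjacency_preserving_compress_sorted[of z x y] adjacency_preserving_compress_sorted[of z y x]
    by (auto simp: insert_commute)
qed

lemma cube_condition_holds: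
  assumes "pos_letter n a" "pos_letter n b" "pos_letter n c" "a \<noteq> b" "b \<noteq> c" "a \<noteq> c"
  shows "cube_condition 5 a b c"
proof -
  obtain h where h: "adjacency_preserving h {gidx a, gidx b, gidx c}"
    "h (gidx a) < 5" "h (gidx b) < 5" "h (gidx c) < 5"
    using adjacency_preserving_compress by blast
  have small: "relabel h x \<in> set small_letters" if "pos_letter n x" "h (gidx x) < 5" for x
    using that by (cases x) (auto simp: small_letters_def pos_letter_def)
  have "relabel h a \<in> set small_letters" "relabel h b \<in> set small_letters"
    "relabel h c \<in> set small_letters"
    using small assms h by auto
  moreover have "relabel h a \<noteq> relabel h b" "relabel h b \<noteq> relabel h c" "relabel h a \<noteq> relabel h c"
    using assms relabel_eq_iff[OF h(1)] by auto
  ultimately have "cube_condition 5 (relabel h a) (relabel h b) (relabel h c)"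
    using cube_condition_small_letters unfolding list_all_iff by blast
  then show ?thesis using cube_condition_relabel[OF h(1)] by simp
qed

lemma cube_condition_pos_eq:
  assumes cube: "cube_condition N a b c" and letters: "pos_letter n a" "pos_letter n b" "pos_letter n c"
    and C: "complement c a = Some Ca" "complement c b = Some Cb"
    and A: "complement a c = Some Ac" "complement b c = Some Bc"
    and r: "reversing N Ca Cb = Reversed (P', Q')"
  shows "\<exists>K1 K2 k. complement a b = Some K1 \<and> complement b a = Some K2 \<and>
    pos_eq n (Ac @ Q') (K1 @ k) \<and> pos_eq n (Bc @ P') (K2 @ k)"
proof -
  obtain K1 K2 k where K: "complement a b = Some K1" "complement b a = Some K2"
    and k1: "reversing N (Ac @ Q') K1 = Reversed (k, [])"
    and k2: "reversing N (Bc @ P') (K2 @ k) = Reversed ([], [])"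
    using cube C A r unfolding cube_condition_def
    by (auto split: option.splits reversal.splits list.splits)
  have pv: "pos_valid n Ca" "pos_valid n Cb" "pos_valid n Ac" "pos_valid n Bc"
    "pos_valid n K1" "pos_valid n K2"
    using complement_pos_valid letters C A K by blast+
  have "pos_valid n P'" "pos_valid n Q'" using reversing_sound[OF r pv(1,2)] by auto
  then have "pos_eq n (Ac @ Q') (K1 @ k)" "pos_valid n k"
    using reversing_sound[OF k1] pv by auto
  moreover have "pos_eq n (Bc @ P') (K2 @ k)"
    using reversing_sound[OF k2] pv \<open>pos_valid n P'\<close> \<open>pos_valid n k\<close> by auto
  ultimately show ?thesis using K by blast
qed

section \<open>Left cancellativity\<close>

definition complement_split :: "nat \<Rightarrow> gen \<Rightarrow> word \<Rightarrow> gen \<Rightarrow> word \<Rightarrow> bool" where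
  "complement_split n a U b V \<longleftrightarrow>
     (a = b \<and> pos_eq n U V) \<or>
     (a \<noteq> b \<and> (\<exists>A B Z. complement a b = Some A \<and> complement b a = Some B \<and>
                       pos_eq n U (A @ Z) \<and> pos_eq n V (B @ Z)))"

definition splits_at_length :: "nat \<Rightarrow> nat \<Rightarrow> bool" where
  "splits_at_length n L \<longleftrightarrow> (\<forall>a b U V. length U = L \<longrightarrow> pos_valid n (a # U) \<longrightarrow>
     pos_eq n (a # U) (b # V) \<longrightarrow> complement_split n a U b V)"

lemma reversing_complete:
  assumes S: "\<forall>l<M. splits_at_length n l"
  shows "pos_valid n (P @ X) \<Longrightarrow> length (P @ X) \<le> M \<Longrightarrow> pos_eq n (P @ X) (Q @ Y) \<Longrightarrow>
    reversing N P Q \<noteq> Clash \<and>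
    (\<forall>P' Q'. reversing N P Q = Reversed (P', Q') \<longrightarrow> (\<exists>Z. pos_eq n X (Q' @ Z) \<and> pos_eq n Y (P' @ Z)))"
proof (induction N P Q arbitrary: X Y rule: reversing.induct)
  case (2 f Q)
  then show ?case by (auto intro!: exI[of _ Y])
next
  case (3 f d P)
  then show ?case using pos_eq_sym by (auto intro!: exI[of _ X])
next
  case (4 f d P e Q)
  have lt: "length (P @ X) < M" using "4.prems"(2) by simp
  have pv: "pos_valid n (d # P @ X)" and eq: "pos_eq n (d # P @ X) (e # Q @ Y)"
    using "4.prems"(1,3) by simp_all
  have split: "complement_split n d (P @ X) e (Q @ Y)"
    using S lt pv eq unfolding splits_at_length_def by blast
  show ?case
  proof (cases "d = e")
    case True
    then show ?thesis using split "4.IH"(1)[OF True, of X Y] "4.prems"(1,2)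
      by (simp add: complement_split_def)
  next
    case False
    obtain A B Z0 where A: "complement d e = Some A" and B: "complement e d = Some B" and
      e1: "pos_eq n (P @ X) (A @ Z0)" and e2: "pos_eq n (Q @ Y) (B @ Z0)"
      using split False unfolding complement_split_def by blast
    have pvPX: "pos_valid n (P @ X)" using pv by simp
    have pvBZ: "pos_valid n (B @ Z0)"
      using pos_eq_pos_valid[OF e2] pos_eq_pos_valid[OF eq pv] by simp
    have lB: "length (B @ Z0) = length (P @ X)"
      using pos_eq_length[OF e2] pos_eq_length[OF eq] by simp
    have IH2: "reversing f P A \<noteq> Clash \<and> (\<forall>P1 A1. reversing f P A = Reversed (P1, A1) \<longrightarrow>
        (\<exists>Z. pos_eq n X (A1 @ Z) \<and> pos_eq n Z0 (P1 @ Z)))"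
      using "4.IH"(2)[OF False HOL.refl A B pvPX _ e1] lt by simp
    show ?thesis
    proof (cases "reversing f P A")
      case (Reversed r1)
      obtain P1 A1 where r1: "reversing f P A = Reversed (P1, A1)" using Reversed by (cases r1) auto
      obtain Z1 where z1: "pos_eq n X (A1 @ Z1)" "pos_eq n Z0 (P1 @ Z1)" using IH2 r1 by blast
      have IH3: "reversing f B Q \<noteq> Clash \<and> (\<forall>B1 Q1. reversing f B Q = Reversed (B1, Q1) \<longrightarrow>
          (\<exists>Z. pos_eq n Z0 (Q1 @ Z) \<and> pos_eq n Y (B1 @ Z)))"
        using "4.IH"(3)[OF False HOL.refl A B r1 HOL.refl pvBZ _ pos_eq_sym[OF e2]] lB lt by simp
      show ?thesis
      proof (cases "reversing f B Q")
        case (Reversed r2)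
        obtain B1 Q1 where r2: "reversing f B Q = Reversed (B1, Q1)" using Reversed by (cases r2) auto
        obtain Z2 where z2: "pos_eq n Z0 (Q1 @ Z2)" "pos_eq n Y (B1 @ Z2)" using IH3 r2 by blast
        have pv1: "pos_valid n (P1 @ Z1)"
          using pos_eq_pos_valid[OF z1(2)] pos_eq_pos_valid[OF e1 pvPX] by simp
        have l1: "length (P1 @ Z1) \<le> M" using pos_eq_length[OF z1(2)] pos_eq_length[OF e1] lt by simp
        have e3: "pos_eq n (P1 @ Z1) (Q1 @ Z2)" using pos_eq_trans[OF pos_eq_sym[OF z1(2)] z2(1)] .
        note IH4 = "4.IH"(4)[OF False HOL.refl A B r1 HOL.refl r2 HOL.refl pv1 l1 e3]
        show ?thesis
        proof (cases "reversing f P1 Q1")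
          case (Reversed r3)
          obtain P2 Q2 where r3: "reversing f P1 Q1 = Reversed (P2, Q2)" using Reversed by (cases r3) auto
          obtain Z3 where z3: "pos_eq n Z1 (Q2 @ Z3)" "pos_eq n Z2 (P2 @ Z3)" using IH4 r3 by blast
          have "pos_eq n X (A1 @ Q2 @ Z3)" using pos_eq_trans[OF z1(1) pos_eq_append_left[OF z3(1)]] .
          moreover have "pos_eq n Y (B1 @ P2 @ Z3)"
            using pos_eq_trans[OF z2(2) pos_eq_append_left[OF z3(2)]] .
          ultimately show ?thesis using False A B r1 r2 r3 by simp blast
        qed (use IH4 False A B r1 r2 in simp_all)
      qed (use IH3 False A B r1 in simp_all)
    qed (use IH2 False A B in simp_all)
  qed
qed simp

lemma pos_step_Cons_cases:
  assumes "pos_step n (c # T) W'"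
  shows "(\<exists>V. W' = c # V \<and> pos_step n T V) \<or>
    (\<exists>b F G R. W' = b # G @ R \<and> T = F @ R \<and> c \<noteq> b \<and>
               complement c b = Some F \<and> complement b c = Some G)"
proof -
  have head: "c \<noteq> b \<and> complement c b = Some u' \<and> complement b c = Some v'"
    if "prel n (c # u') (b # v')" for c b u' v'
    using that by (cases rule: prel.cases) auto
  obtain p u v q where r: "prel n u v \<or> prel n v u" and e: "c # T = p @ u @ q" "W' = p @ v @ q"
    using assms unfolding pos_step_def by blast
  show ?thesis
  proof (cases p)
    case Nil
    have "u \<noteq> [] \<and> v \<noteq> []" using r by (auto elim: prel.cases)
    then obtain u' v' b where uv: "u = c # u'" "v = b # v'" "T = u' @ q"
      using e Nil by (cases u; cases v) auto
    then show ?thesis using r head[of c u' b v'] head[of b v' c u'] e Nil by auto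
  next
    case (Cons c' p')
    then have "pos_step n T (p' @ v @ q)" using r e unfolding pos_step_def by auto
    then show ?thesis using e Cons by auto
  qed
qed

text \<open>The induction step at the head: completeness of reversing on shorter words, followed
  by the cube condition for \<open>a\<close>, \<open>b\<close>, \<open>c\<close>.\<close>

lemma complement_split_head_step:
  assumes IH: "\<forall>l<L. splits_at_length n l"
    and letters: "pos_letter n a" "pos_letter n b" "pos_letter n c" and ac: "a \<noteq> c" and cb: "c \<noteq> b"
    and A: "complement a c = Some A" and C: "complement c a = Some C"
    and F: "complement c b = Some F" and G: "complement b c = Some G"
    and UZ: "pos_eq n U (A @ Z)" and eq: "pos_eq n (C @ Z) (F @ R)"
    and CZ: "pos_valid n (C @ Z)" "length (C @ Z) \<le> L"
  shows "complement_split n a U b (G @ R)"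
proof -
  have rv: "reversing 5 C F \<noteq> Clash \<and> (\<forall>P' Q'. reversing 5 C F = Reversed (P', Q') \<longrightarrow>
      (\<exists>Z'. pos_eq n Z (Q' @ Z') \<and> pos_eq n R (P' @ Z')))"
    using reversing_complete[OF IH CZ(1,2) eq] .
  show ?thesis
  proof (cases "a = b")
    case True
    have "C = F" "G = A" using C F G A True by simp_all
    then have "reversing 5 C F = Reversed ([], [])" using reversing_self complement_length[OF C] by simp
    then obtain Z' where "pos_eq n Z Z'" "pos_eq n R Z'" using rv by auto
    then have "pos_eq n U (G @ R)"
      using pos_eq_trans[OF UZ pos_eq_append_left[OF pos_eq_trans[OF \<open>pos_eq n Z Z'\<close>
            pos_eq_sym[OF \<open>pos_eq n R Z'\<close>]]]] \<open>G = A\<close> by simp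
    then show ?thesis using True unfolding complement_split_def by simp
  next
    case ab: False
    have cube: "cube_condition 5 a b c" using cube_condition_holds[OF letters ab] cb ac by simp
    obtain P' Q' where r: "reversing 5 C F = Reversed (P', Q')"
      using rv cube C F A G unfolding cube_condition_def by (auto split: reversal.splits)
    obtain Z3 where z3: "pos_eq n Z (Q' @ Z3)" "pos_eq n R (P' @ Z3)" using rv r by blast
    obtain K1 K2 k where K: "complement a b = Some K1" "complement b a = Some K2"
      and k: "pos_eq n (A @ Q') (K1 @ k)" "pos_eq n (G @ P') (K2 @ k)"
      using cube_condition_pos_eq[OF cube letters C F A G r] by blast
    have "pos_eq n U (A @ Q' @ Z3)" using pos_eq_trans[OF UZ pos_eq_append_left[OF z3(1)]] .
    also have "pos_eq n (A @ Q' @ Z3) (K1 @ k @ Z3)" using pos_eq_append_right[OF k(1)] by simp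
    finally have "pos_eq n U (K1 @ k @ Z3)" .
    moreover have "pos_eq n (G @ R) (G @ P' @ Z3)" using pos_eq_append_left[OF z3(2)] .
    then have "pos_eq n (G @ R) (K2 @ k @ Z3)"
      using pos_eq_trans pos_eq_append_right[OF k(2), of Z3] by simp
    ultimately show ?thesis using ab K unfolding complement_split_def by blast
  qed
qed

lemma complement_split_pos_step:
  assumes IH: "\<forall>l<L. splits_at_length n l"
    and split: "complement_split n a U c T" and a: "pos_letter n a"
    and T: "pos_valid n (c # T)" "length T = L" and step: "pos_step n (c # T) W'"
  shows "\<exists>c' T'. W' = c' # T' \<and> complement_split n a U c' T'"
  using pos_step_Cons_cases[OF step]
proof (elim disjE exE conjE)
  fix V' assume W': "W' = c # V'" and "pos_step n T V'"
  then have TV: "pos_eq n T V'" unfolding pos_eq_iff_pos_steps by blast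
  have "complement_split n a U c V'"
    using split pos_eq_trans[OF _ TV] pos_eq_trans[OF pos_eq_sym[OF TV]]
    unfolding complement_split_def by blast
  then show ?thesis using W' by blast
next
  fix b F G R assume W': "W' = b # G @ R" and TR: "T = F @ R" and cb: "c \<noteq> b"
    and F: "complement c b = Some F" and G: "complement b c = Some G"
  have "pos_eq n (c # T) W'" using step unfolding pos_eq_iff_pos_steps by blast
  then have b: "pos_letter n b" and c: "pos_letter n c"
    using pos_eq_pos_valid[of n "c # T" W'] T(1) W' by auto
  have "complement_split n a U b (G @ R)"
  proof (cases "a = c")
    case True
    then show ?thesis using split F G TR cb unfolding complement_split_def by auto
  next
    case ac: False
    obtain A C Z where A: "complement a c = Some A" and C: "complement c a = Some C" and
      UZ: "pos_eq n U (A @ Z)" and TZ: "pos_eq n T (C @ Z)"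
      using split ac unfolding complement_split_def by blast
    have "pos_valid n (C @ Z)" "length (C @ Z) \<le> L"
      using pos_eq_pos_valid[OF TZ] pos_eq_length[OF TZ] T by auto
    then show ?thesis
      using complement_split_head_step[OF IH a b c ac cb A C F G UZ] TZ TR pos_eq_sym by blast
  qed
  then show ?thesis using W' by auto
qed

theorem splits_at_length: "splits_at_length n L"
proof (induction L rule: less_induct)
  case (less L)
  show ?case unfolding splits_at_length_def
  proof (intro allI impI)
    fix a b U V
    assume U: "length U = L" "pos_valid n (a # U)" and eq: "pos_eq n (a # U) (b # V)"
    have "\<exists>c T. W = c # T \<and> complement_split n a U c T \<and> pos_valid n W \<and> length T = L"
      if "(pos_step n)\<^sup>*\<^sup>* (a # U) W" for W
      using that
    proof (induction rule: rtranclp_induct)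
      case base
      then show ?case using U by (simp add: complement_split_def)
    next
      case (step y z)
      then obtain c T where y: "y = c # T" "complement_split n a U c T" "pos_valid n y" "length T = L"
        by blast
      have IH: "\<forall>l<L. splits_at_length n l" using less.IH by blast
      obtain c' T' where z: "z = c' # T'" "complement_split n a U c' T'"
        using complement_split_pos_step[OF IH y(2) _ _ y(4)] step(2) y U(2) by (metis pos_valid_Cons)
      have "pos_eq n y z" using step(2) unfolding pos_eq_iff_pos_steps by blast
      then show ?case
        using z y pos_eq_pos_valid_length[of n y z] by auto
    qed
    then show "complement_split n a U b V" using eq unfolding pos_eq_iff_pos_steps by blast
  qed
qed

lemma pos_eq_Cons_split:
  "pos_valid n (a # U) \<Longrightarrow> pos_eq n (a # U) (b # V) \<Longrightarrow> complement_split n a U b V"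
  using splits_at_length unfolding splits_at_length_def by blast

theorem pos_eq_left_cancel:
  "pos_valid n (P @ U) \<Longrightarrow> pos_eq n (P @ U) (P @ V) \<Longrightarrow> pos_eq n U V"
proof (induction P)
  case (Cons a P)
  then show ?case using pos_eq_Cons_split[of n a "P @ U" a "P @ V"]
    by (simp add: complement_split_def)
qed simp

section \<open>Reversal and the flip automorphism\<close>

lemma word_cong_map:
  assumes "\<And>u v. R u v \<Longrightarrow> R (f u) (f v) \<or> R (f v) (f u)"
    and "\<And>u v. f (u @ v) = f u @ f v"
  shows "word_cong R u v \<Longrightarrow> word_cong R (f u) (f v)"
proof (induction rule: word_cong.induct)
  case (step u v p q)
  have "word_cong R (f p @ f u @ f q) (f p @ f v @ f q)"
    using assms(1)[OF step] by (auto intro: word_cong.intros)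
  then show ?case by (simp add: assms(2))
qed (auto intro: word_cong.intros)

lemma word_cong_rev:
  assumes "\<And>u v. R u v \<Longrightarrow> R (rev u) (rev v) \<or> R (rev v) (rev u)"
  shows "word_cong R u v \<Longrightarrow> word_cong R (rev u) (rev v)"
proof (induction rule: word_cong.induct)
  case (step u v p q)
  have "word_cong R (rev q @ rev u @ rev p) (rev q @ rev v @ rev p)"
    using assms[OF step] by (auto intro: word_cong.intros)
  then show ?case by simp
qed (auto intro: word_cong.intros)

lemma prel_rev: "prel n u v \<Longrightarrow> prel n (rev u) (rev v) \<or> prel n (rev v) (rev u)"
proof (induction rule: prel.induct)
  case (comm_ss i j) then show ?case using prel.comm_ss[of j n i] by auto
next
  case (comm_xx i j) then show ?case using prel.comm_xx[of j n i] by auto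
next
  case (comm_xs i j) then show ?case using prel.comm_xs[of i n j] by auto
next
  case (braid i) then show ?case using prel.braid[of i n] by auto
next
  case (mixed1 i) then show ?case using prel.mixed2[of i n] by auto
next
  case (mixed2 i) then show ?case using prel.mixed1[of i n] by auto
qed

lemma pos_eq_rev: "pos_eq n u v \<Longrightarrow> pos_eq n (rev u) (rev v)"
  unfolding pos_eq_def by (rule word_cong_rev[where R = "prel n", OF prel_rev])

lemma pos_eq_rev_iff: "pos_eq n (rev u) (rev v) \<longleftrightarrow> pos_eq n u v"
  using pos_eq_rev[of n "rev u" "rev v"] pos_eq_rev[of n u v] by auto

lemma pos_valid_rev [simp]: "pos_valid n (rev u) \<longleftrightarrow> pos_valid n u"
  by (auto simp: pos_valid_def positive_word_def valid_word_def)

lemma pos_eq_right_cancel: "pos_valid n (U @ P) \<Longrightarrow> pos_eq n (U @ P) (V @ P) \<Longrightarrow> pos_eq n U V"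
  using pos_eq_left_cancel[of n "rev P" "rev U" "rev V"] pos_eq_rev[of n "U @ P" "V @ P"]
  by (simp add: pos_eq_rev_iff)

lemma irel_rev: "irel n u v \<Longrightarrow> irel n (rev u) (rev v)"
  by (induction rule: irel.induct) (auto intro: irel.intros)

lemma sb_eq_rev: "sb_eq n u v \<Longrightarrow> sb_eq n (rev u) (rev v)"
  unfolding sb_eq_def by (rule word_cong_rev) (use prel_rev irel_rev in blast)

fun flip :: "nat \<Rightarrow> gen \<Rightarrow> gen" where
  "flip n (Sg i) = Sg (n - i)" | "flip n (Xg i) = Xg (n - i)" | "flip n (Si i) = Si (n - i)"

lemma prel_flip: "prel n u v \<Longrightarrow> prel n (map (flip n) u) (map (flip n) v) \<or> prel n (map (flip n) v) (map (flip n) u)"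
proof (induction rule: prel.induct)
  case (comm_ss i j)
  then have "1 \<le> n - i" "n - i \<le> n - 1" "1 \<le> n - j" "n - j \<le> n - 1" "n - i + 1 < n - j \<or> n - j + 1 < n - i" by linarith+
  then show ?case using prel.comm_ss[of "n - i" n "n - j"] by simp
next
  case (comm_xx i j)
  then have "1 \<le> n - i" "n - i \<le> n - 1" "1 \<le> n - j" "n - j \<le> n - 1" "n - i + 1 < n - j \<or> n - j + 1 < n - i" by linarith+
  then show ?case using prel.comm_xx[of "n - i" n "n - j"] by simp
next
  case (comm_xs i j)
  then have "1 \<le> n - i" "n - i \<le> n - 1" "1 \<le> n - j" "n - j \<le> n - 1" "n - i \<noteq> n - j + 1" "n - j \<noteq> n - i + 1" by linarith+
  then show ?case using prel.comm_xs[of "n - i" n "n - j"] by simp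
next
  case (braid i)
  have e: "n - (i + 1) + 1 = n - i" "1 \<le> n - (i+1)" "n - (i + 1) + 1 \<le> n - 1" using braid by auto
  then show ?case using prel.braid[of "n - (i+1)" n] by (simp add: e)
next
  case (mixed1 i)
  have e: "n - (i + 1) + 1 = n - i" "1 \<le> n - (i+1)" "n - (i + 1) + 1 \<le> n - 1" using mixed1 by auto
  then show ?case using prel.mixed2[of "n - (i+1)" n] by (simp add: e)
next
  case (mixed2 i)
  have e: "n - (i + 1) + 1 = n - i" "1 \<le> n - (i+1)" "n - (i + 1) + 1 \<le> n - 1" using mixed2 by auto
  then show ?case using prel.mixed1[of "n - (i+1)" n] by (simp add: e)
qed

lemma pos_eq_flip: "pos_eq n u v \<Longrightarrow> pos_eq n (map (flip n) u) (map (flip n) v)"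
  unfolding pos_eq_def by (rule word_cong_map[where R = "prel n", OF prel_flip]) simp_all

lemma pos_letter_flip: "pos_letter n a \<Longrightarrow> pos_letter n (flip n a)"
  by (cases a) (auto simp: pos_letter_def)

lemma flip_flip: "pos_letter n a \<Longrightarrow> flip n (flip n a) = a"
  by (cases a) (auto simp: pos_letter_def)

lemma pos_valid_flip: "pos_valid n W \<Longrightarrow> pos_valid n (map (flip n) W)"
  by (induction W) (auto simp: pos_letter_flip)

lemma map_flip_flip: "pos_valid n W \<Longrightarrow> map (flip n) (map (flip n) W) = W"
  by (induction W) (auto simp: flip_flip)

section \<open>The Garside element\<close>

definition sigma_run :: "nat \<Rightarrow> word" where
  "sigma_run k = map Sg [1..<Suc k]"

text \<open>\<^term>\<open>letter t i\<close> is \<open>\<sigma>\<^sub>i\<close> or \<open>x\<^sub>i\<close>: both kinds of letters move through \<open>\<Delta>\<close> in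
  the same way, so they are treated together.\<close>

fun letter :: "bool \<Rightarrow> nat \<Rightarrow> gen" where
  "letter True i = Sg i" | "letter False i = Xg i"

lemma Delta_Suc: "Delta (Suc k) = sigma_run k @ Delta k"
  by (cases k) (auto simp: Delta_def sigma_run_def)

lemma Delta_2: "Delta 2 = [Sg 1]" by (simp add: Delta_def numeral_2_eq_2)

lemma set_sigma_run: "x \<in> set (sigma_run k) \<Longrightarrow> \<exists>j. x = Sg j \<and> 1 \<le> j \<and> j \<le> k"
  by (auto simp: sigma_run_def)

lemma set_Delta: "x \<in> set (Delta k) \<Longrightarrow> \<exists>j. x = Sg j \<and> 1 \<le> j \<and> j < k"
proof (induction k)
  case 0 then show ?case by (simp add: Delta_def)
next
  case (Suc k) then show ?case using set_sigma_run by (fastforce simp: Delta_Suc)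
qed

lemma pos_valid_Delta: "k \<le> n \<Longrightarrow> pos_valid n (Delta k)"
proof -
  assume k: "k \<le> n"
  have "\<forall>x\<in>set (Delta k). pos_letter n x" using set_Delta k by (fastforce simp: pos_letter_def)
  then show ?thesis by (auto simp: pos_valid_def pos_letter_def positive_word_def valid_word_def)
qed

lemma pos_valid_sigma_run: "k < n \<Longrightarrow> pos_valid n (sigma_run k)"
  by (auto simp: pos_valid_def sigma_run_def positive_word_def valid_word_def)

lemma pos_eq_commute_word:
  assumes "\<forall>b\<in>set W. pos_eq n [a, b] [b, a]"
  shows "pos_eq n (a # W) (W @ [a])"
  using assms
proof (induction W)
  case Nil then show ?case by simp
next
  case (Cons b W)
  have "pos_eq n (a # b # W) (b # a # W)" using pos_eq_append_right[of n "[a,b]" "[b,a]" W] Cons.prems by simp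
  also have "pos_eq n (b # a # W) (b # W @ [a])" using Cons pos_eq_Cons by simp
  finally show ?case by simp
qed

lemma letter_commute:
  assumes "1 \<le> i" "i \<le> n - 1" "1 \<le> j" "j \<le> n - 1" "i + 2 \<le> j \<or> j + 2 \<le> i"
  shows "pos_eq n [letter t i, Sg j] [Sg j, letter t i]"
  using assms by (cases t) (auto intro!: pos_eq_of_prel prel.comm_ss prel.comm_xs)

lemma letter_commute_same:
  assumes "1 \<le> i" "i \<le> n - 1"
  shows "pos_eq n [letter t i, Sg i] [Sg i, letter t i]"
  using assms by (cases t) (auto intro!: pos_eq_of_prel prel.comm_xs)

lemma letter_braid:
  assumes "1 \<le> i" "i + 1 \<le> n - 1"
  shows "pos_eq n [letter t (i+1), Sg i, Sg (i+1)] [Sg i, Sg (i+1), letter t i]"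
  using assms prel.braid[of i n] prel.mixed1[of i n]
  by (cases t) (auto intro!: pos_eq_sym[OF pos_eq_of_prel])

lemma upt_split3: "1 \<le> i \<Longrightarrow> i + 1 \<le> k \<Longrightarrow> [1..<Suc k] = [1..<i] @ [i, i+1] @ [i+2..<Suc k]"
proof -
  assume a: "1 \<le> i" "i + 1 \<le> k"
  have "[1..<Suc k] = [1..<i] @ [i..<Suc k]" using a upt_add_eq_append[of 1 i "Suc k - i"] by simp
  also have "[i..<Suc k] = i # (i+1) # [i+2..<Suc k]" using a by (simp add: upt_conv_Cons)
  finally show ?thesis by simp
qed

lemma sigma_run_conj:
  assumes "1 \<le> i" "i + 1 \<le> k" "k \<le> n - 1"
  shows "pos_eq n (letter t (i+1) # sigma_run k) (sigma_run k @ [letter t i])"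
proof -
  define A where "A = map Sg [1..<i]"
  define B where "B = map Sg [i+2..<Suc k]"
  have P: "sigma_run k = A @ [Sg i, Sg (i+1)] @ B" using upt_split3[OF assms(1,2)] by (simp add: sigma_run_def A_def B_def)
  have cA: "pos_eq n (letter t (i+1) # A) (A @ [letter t (i+1)])"
    by (rule pos_eq_commute_word) (use assms in \<open>auto simp: A_def intro!: letter_commute\<close>)
  have cB: "pos_eq n (letter t i # B) (B @ [letter t i])"
    by (rule pos_eq_commute_word) (use assms in \<open>auto simp: B_def intro!: letter_commute\<close>)
  have "pos_eq n (letter t (i+1) # sigma_run k) (A @ [letter t (i+1), Sg i, Sg (i+1)] @ B)"
    using pos_eq_append_right[OF cA, of "[Sg i, Sg (i+1)] @ B"] by (simp add: P)
  also have "pos_eq n (A @ [letter t (i+1), Sg i, Sg (i+1)] @ B) (A @ [Sg i, Sg (i+1), letter t i] @ B)"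
    using letter_braid[of i n t] assms by (intro pos_eq_append_left pos_eq_append_right) simp_all
  also have "pos_eq n (A @ [Sg i, Sg (i+1), letter t i] @ B) (A @ [Sg i, Sg (i+1)] @ B @ [letter t i])"
    using pos_eq_append_left[OF cB, of "A @ [Sg i, Sg (i+1)]"] by simp
  finally show ?thesis by (simp add: P)
qed

lemma rev_sigma_run_conj:
  assumes "1 \<le> i" "i + 1 \<le> k" "k \<le> n - 1"
  shows "pos_eq n (letter t i # rev (sigma_run k)) (rev (sigma_run k) @ [letter t (i+1)])"
  using pos_eq_rev[OF sigma_run_conj[OF assms, of t]] by (simp add: pos_eq_sym)

lemma Delta_split:
  "1 \<le> k \<Longrightarrow> k + 1 \<le> n \<Longrightarrow> pos_eq n (Delta (Suc k)) (Delta k @ rev (sigma_run k))"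
proof (induction k)
  case 0 then show ?case by simp
next
  case (Suc k)
  show ?case
  proof (cases "k = 0")
    case True then show ?thesis by (simp add: Delta_def sigma_run_def)
  next
    case False
    have IH: "pos_eq n (Delta (Suc k)) (Delta k @ rev (sigma_run k))" using Suc False by simp
    have PS: "sigma_run (Suc k) = sigma_run k @ [Sg (Suc k)]" by (simp add: sigma_run_def)
    have c: "pos_eq n (Sg (Suc k) # Delta k) (Delta k @ [Sg (Suc k)])"
      apply (rule pos_eq_commute_word)
      using set_Delta[of _ k] Suc.prems by (fastforce intro!: letter_commute[of "Suc k" n _ True, simplified])
    have "pos_eq n (Delta (Suc (Suc k))) (sigma_run k @ Sg (Suc k) # Delta k @ rev (sigma_run k))"
      using pos_eq_append_left[OF IH, of "sigma_run k @ [Sg (Suc k)]"] by (simp add: Delta_Suc[of "Suc k"] PS)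
    also have "pos_eq n (sigma_run k @ Sg (Suc k) # Delta k @ rev (sigma_run k)) (sigma_run k @ Delta k @ Sg (Suc k) # rev (sigma_run k))"
      using pos_eq_append_left[OF pos_eq_append_right[OF c, of "rev (sigma_run k)"], of "sigma_run k"] by simp
    finally show ?thesis by (simp add: Delta_Suc PS)
  qed
qed

lemma pos_eq_rev_Delta: "k \<le> n \<Longrightarrow> pos_eq n (rev (Delta k)) (Delta k)"
proof (induction k)
  case 0 then show ?case by (simp add: Delta_def)
next
  case (Suc k)
  show ?case
  proof (cases "k = 0")
    case True then show ?thesis by (simp add: Delta_def)
  next
    case False
    have "pos_eq n (rev (Delta (Suc k))) (Delta k @ rev (sigma_run k))"
      using pos_eq_append_right[OF Suc.IH, of "rev (sigma_run k)"] Suc.prems by (simp add: Delta_Suc)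
    also have "pos_eq n (Delta k @ rev (sigma_run k)) (Delta (Suc k))"
      using Delta_split[of k n] False Suc.prems by (simp add: pos_eq_sym)
    finally show ?thesis .
  qed
qed

lemma letter_Delta_gen:
  "k \<le> n \<Longrightarrow> 1 \<le> i \<Longrightarrow> i + 1 \<le> k \<Longrightarrow> pos_eq n (letter t i # Delta k) (Delta k @ [letter t (k - i)])"
proof (induction k arbitrary: i)
  case 0 then show ?case by simp
next
  case (Suc k)
  show ?case
  proof (cases "k = 1")
    case True
    then have "i = 1" using Suc.prems by simp
    then show ?thesis using True Suc.prems letter_commute_same[of 1 n t] by (simp add: Delta_2[simplified numeral_2_eq_2])
  next
    case k1: False
    show ?thesis
    proof (cases "2 \<le> i")
      case True
      have c1: "pos_eq n (letter t (i - 1 + 1) # sigma_run k) (sigma_run k @ [letter t (i - 1)])"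
        using sigma_run_conj[of "i - 1" k n t] True Suc.prems by simp
      have IH: "pos_eq n (letter t (i - 1) # Delta k) (Delta k @ [letter t (k - (i - 1))])"
        using Suc.IH[of "i - 1"] True Suc.prems by simp
      have "pos_eq n (letter t i # Delta (Suc k)) (sigma_run k @ letter t (i - 1) # Delta k)"
        using pos_eq_append_right[OF c1, of "Delta k"] True by (simp add: Delta_Suc)
      also have "pos_eq n (sigma_run k @ letter t (i - 1) # Delta k) (sigma_run k @ Delta k @ [letter t (k - (i - 1))])"
        using pos_eq_append_left[OF IH] by simp
      finally show ?thesis using True Suc.prems by (simp add: Delta_Suc Suc_diff_le)
    next
      case False
      then have i1: "i = 1" using Suc.prems by simp
      have k2: "2 \<le> k" using k1 Suc.prems i1 by simp
      have IH: "pos_eq n (letter t 1 # Delta k) (Delta k @ [letter t (k - 1)])"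
        using Suc.IH[of 1] k2 Suc.prems by simp
      have c2: "pos_eq n (letter t (k - 1) # rev (sigma_run k)) (rev (sigma_run k) @ [letter t (k - 1 + 1)])"
        using rev_sigma_run_conj[of "k - 1" k n t] k2 Suc.prems by simp
      have ds: "pos_eq n (Delta (Suc k)) (Delta k @ rev (sigma_run k))"
        using Delta_split[of k n] k2 Suc.prems by simp
      have "pos_eq n (letter t 1 # Delta (Suc k)) (letter t 1 # Delta k @ rev (sigma_run k))"
        using pos_eq_Cons[OF ds] .
      also have "pos_eq n (letter t 1 # Delta k @ rev (sigma_run k)) (Delta k @ letter t (k - 1) # rev (sigma_run k))"
        using pos_eq_append_right[OF IH, of "rev (sigma_run k)"] by simp
      also have "pos_eq n (Delta k @ letter t (k - 1) # rev (sigma_run k)) (Delta k @ rev (sigma_run k) @ [letter t k])"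
        using pos_eq_append_left[OF c2, of "Delta k"] k2 by simp
      also have "pos_eq n (Delta k @ rev (sigma_run k) @ [letter t k]) (Delta (Suc k) @ [letter t k])"
        using pos_eq_append_right[OF pos_eq_sym[OF ds], of "[letter t k]"] by simp
      finally show ?thesis using i1 by simp
    qed
  qed
qed

lemma letter_Delta:
  assumes "pos_letter n a"
  shows "pos_eq n (a # Delta n) (Delta n @ [flip n a])"
proof (cases a)
  case (Sg i)
  then show ?thesis using letter_Delta_gen[of n n i True] assms by (auto simp: pos_letter_def)
next
  case (Xg i)
  then show ?thesis using letter_Delta_gen[of n n i False] assms by (auto simp: pos_letter_def)
next
  case (Si i) then show ?thesis using assms by (simp add: pos_letter_def)
qed

lemma word_Delta: "pos_valid n X \<Longrightarrow> pos_eq n (X @ Delta n) (Delta n @ map (flip n) X)"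
proof (induction X)
  case Nil then show ?case by simp
next
  case (Cons a X)
  have "pos_eq n ((a # X) @ Delta n) (a # Delta n @ map (flip n) X)"
    using pos_eq_Cons[OF Cons.IH] Cons.prems by simp
  also have "pos_eq n (a # Delta n @ map (flip n) X) (Delta n @ flip n a # map (flip n) X)"
    using pos_eq_append_right[OF letter_Delta[of n a], of "map (flip n) X"] Cons.prems by simp
  finally show ?case by simp
qed

lemma flip_Delta: "pos_eq n (map (flip n) (Delta n)) (Delta n)"
proof -
  have "pos_eq n (Delta n @ Delta n) (Delta n @ map (flip n) (Delta n))"
    using word_Delta[OF pos_valid_Delta[of n n]] by simp
  then have "pos_eq n (Delta n) (map (flip n) (Delta n))"
    using pos_eq_left_cancel[of n "Delta n" "Delta n"] pos_valid_Delta[of n n] by simp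
  then show ?thesis by (rule pos_eq_sym)
qed

lemma Delta_right_divisible_gen:
  "k \<le> n \<Longrightarrow> 1 \<le> i \<Longrightarrow> i + 1 \<le> k \<Longrightarrow> \<exists>D. pos_valid n D \<and> pos_eq n (Delta k) (D @ [Sg i])"
proof (induction k arbitrary: i)
  case 0 then show ?case by simp
next
  case (Suc k)
  show ?case
  proof (cases "i + 1 \<le> k")
    case True
    then obtain D where D: "pos_valid n D" "pos_eq n (Delta k) (D @ [Sg i])" using Suc by auto
    have "pos_eq n (Delta (Suc k)) ((sigma_run k @ D) @ [Sg i])"
      using pos_eq_append_left[OF D(2), of "sigma_run k"] by (simp add: Delta_Suc)
    moreover have "pos_valid n (sigma_run k @ D)" using D pos_valid_sigma_run[of k n] Suc.prems by simp
    ultimately show ?thesis by blast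
  next
    case False
    then have ik: "i = k" "1 \<le> k" using Suc.prems by auto
    have u: "[1..<Suc k] = 1 # [Suc 1..<Suc k]" using ik upt_conv_Cons[of 1 "Suc k"] by simp
    obtain Y where Y: "Delta (Suc k) = Sg 1 # Y"
      using u by (simp add: Delta_Suc sigma_run_def)
    have l: "pos_eq n (letter True 1 # Delta (Suc k)) (Delta (Suc k) @ [letter True (Suc k - 1)])"
      using letter_Delta_gen[of "Suc k" n 1 True] Suc.prems ik by simp
    have "pos_eq n ([Sg 1] @ (Sg 1 # Y)) ([Sg 1] @ (Y @ [Sg k]))" using l Y by simp
    moreover have "pos_valid n ([Sg 1] @ (Sg 1 # Y))"
      using pos_valid_Delta[of "Suc k" n] Suc.prems Y by simp
    ultimately have "pos_eq n (Sg 1 # Y) (Y @ [Sg k])" using pos_eq_left_cancel by blast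
    moreover have "pos_valid n Y" using pos_valid_Delta[of "Suc k" n] Suc.prems Y by simp
    ultimately show ?thesis using Y ik by auto
  qed
qed

lemma Delta_right_divisible: "1 \<le> i \<Longrightarrow> i + 1 \<le> n \<Longrightarrow> \<exists>D. pos_valid n D \<and> pos_eq n (Delta n) (D @ [Sg i])"
  using Delta_right_divisible_gen by blast

lemma Delta_left_divisible: "1 \<le> i \<Longrightarrow> i + 1 \<le> n \<Longrightarrow> \<exists>E. pos_valid n E \<and> pos_eq n (Delta n) (Sg i # E)"
proof -
  assume a: "1 \<le> i" "i + 1 \<le> n"
  obtain D where D: "pos_valid n D" "pos_eq n (Delta n) (D @ [Sg i])" using Delta_right_divisible[OF a] by blast
  have "pos_eq n (Delta n) (rev (Delta n))" using pos_eq_rev_Delta[of n n] pos_eq_sym by blast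
  also have "pos_eq n (rev (Delta n)) (Sg i # rev D)" using pos_eq_rev[OF D(2)] by simp
  finally show ?thesis using D(1) by (intro exI[of _ "rev D"]) simp
qed

section \<open>Equality in the singular braid monoid\<close>

lemma sb_eq_refl [simp]: "sb_eq n u u"
  unfolding sb_eq_def by (rule word_cong.refl)

lemma sb_eq_sym: "sb_eq n u v \<Longrightarrow> sb_eq n v u"
  unfolding sb_eq_def by (rule word_cong.sym)

lemma sb_eq_trans [trans]: "sb_eq n u v \<Longrightarrow> sb_eq n v w \<Longrightarrow> sb_eq n u w"
  unfolding sb_eq_def by (rule word_cong.trans)

lemma sb_eq_append: "sb_eq n u v \<Longrightarrow> sb_eq n u' v' \<Longrightarrow> sb_eq n (u @ u') (v @ v')"
  unfolding sb_eq_def by (rule word_cong_append)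

lemma sb_eq_append_left: "sb_eq n u v \<Longrightarrow> sb_eq n (p @ u) (p @ v)"
  using sb_eq_append[OF sb_eq_refl] by blast

lemma sb_eq_append_right: "sb_eq n u v \<Longrightarrow> sb_eq n (u @ q) (v @ q)"
  using sb_eq_append[OF _ sb_eq_refl] by blast

lemma sb_eq_of_pos_eq: "pos_eq n u v \<Longrightarrow> sb_eq n u v"
  unfolding pos_eq_def sb_eq_def by (erule word_cong_mono) simp

lemma sb_eq_of_irel: "irel n u v \<Longrightarrow> sb_eq n u v"
  using word_cong.step[of "\<lambda>u v. prel n u v \<or> irel n u v" u v "[]" "[]"] unfolding sb_eq_def by simp

lemma valid_word_append [simp]: "valid_word n (u @ v) \<longleftrightarrow> valid_word n u \<and> valid_word n v"
  by (auto simp: valid_word_def)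

lemma sb_eq_valid_word: "sb_eq n u v \<Longrightarrow> valid_word n u \<longleftrightarrow> valid_word n v"
  unfolding sb_eq_def
proof (induction rule: word_cong.induct)
  case (step u v p q)
  then have "valid_word n u \<and> valid_word n v"
    by (auto elim!: prel.cases irel.cases simp: valid_word_def)
  then show ?case by simp
qed auto

definition sigma_word :: "nat \<Rightarrow> word \<Rightarrow> bool" where
  "sigma_word n W \<longleftrightarrow> (\<forall>x\<in>set W. \<exists>i. x = Sg i \<and> 1 \<le> i \<and> i \<le> n - 1)"

lemma sigma_word_Delta: "sigma_word n (Delta n)"
  using set_Delta[of _ n] by (fastforce simp: sigma_word_def)

lemma winv_Nil [simp]: "winv [] = []"
  by (simp add: winv_def)

lemma winv_Cons: "winv (a # W) = winv W @ [ginv a]"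
  by (simp add: winv_def)

lemma valid_word_winv: "sigma_word n W \<Longrightarrow> valid_word n (winv W)"
  by (induction W) (auto simp: sigma_word_def winv_Cons valid_word_def)

lemma sb_eq_winv_right: "sigma_word n W \<Longrightarrow> sb_eq n (W @ winv W) []"
proof (induction W)
  case (Cons a W)
  obtain i where a: "a = Sg i" "1 \<le> i" "i \<le> n - 1" using Cons.prems by (auto simp: sigma_word_def)
  have "(a # W) @ winv (a # W) = [Sg i] @ (W @ winv W) @ [Si i]"
    using a by (simp add: winv_Cons)
  also have "sb_eq n \<dots> ([Sg i] @ [] @ [Si i])"
    using Cons by (intro sb_eq_append_left sb_eq_append_right) (simp add: sigma_word_def)
  also have "sb_eq n ([Sg i] @ [] @ [Si i]) []" using a by (auto intro!: sb_eq_of_irel irel.intros)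
  finally show ?case .
qed simp

lemma sb_eq_winv_left: "sigma_word n W \<Longrightarrow> sb_eq n (winv W @ W) []"
proof (induction W)
  case (Cons a W)
  obtain i where a: "a = Sg i" "1 \<le> i" "i \<le> n - 1" using Cons.prems by (auto simp: sigma_word_def)
  have "sb_eq n (winv (a # W) @ (a # W)) (winv W @ [Si i, Sg i] @ W)"
    using a by (simp add: winv_Cons)
  also have "sb_eq n (winv W @ [Si i, Sg i] @ W) (winv W @ [] @ W)"
    using a by (intro sb_eq_append_left sb_eq_append_right) (auto intro!: sb_eq_of_irel irel.intros)
  also have "sb_eq n (winv W @ [] @ W) []" using Cons by (simp add: sigma_word_def)
  finally show ?case .
qed simp

lemma sb_eq_winv_of_pos_eq:
  assumes "sigma_word n X" "sigma_word n Y" "pos_eq n X Y"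
  shows "sb_eq n (winv X) (winv Y)"
proof -
  have "sb_eq n (winv X) (winv X @ Y @ winv Y)"
    using sb_eq_append_left[OF sb_eq_sym[OF sb_eq_winv_right[OF assms(2)]], of "winv X"] by simp
  also have "sb_eq n (winv X @ Y @ winv Y) (winv X @ X @ winv Y)"
    using sb_eq_append_left[OF sb_eq_append_right[OF sb_eq_of_pos_eq[OF pos_eq_sym[OF assms(3)]]]] .
  also have "sb_eq n (winv X @ X @ winv Y) ([] @ winv Y)"
    using sb_eq_append_right[OF sb_eq_winv_left[OF assms(1)]] by simp
  finally show ?thesis by simp
qed

section \<open>Powers of the Garside element\<close>

definition Delta_rep :: "nat \<Rightarrow> nat \<Rightarrow> word" where
  "Delta_rep n K = concat (replicate K (Delta n))"

definition Delta_inv_rep :: "nat \<Rightarrow> nat \<Rightarrow> word" where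
  "Delta_inv_rep n j = concat (replicate j (winv (Delta n)))"

lemma Delta_pow_nonneg: "0 \<le> m \<Longrightarrow> Delta_pow n m = Delta_rep n (nat m)"
  by (simp add: Delta_pow_def Delta_rep_def)

lemma Delta_pow_neg: "m < 0 \<Longrightarrow> Delta_pow n m = Delta_inv_rep n (nat (- m))"
  by (simp add: Delta_pow_def Delta_inv_rep_def)

lemma Delta_rep_Suc: "Delta_rep n (Suc K) = Delta n @ Delta_rep n K"
  by (simp add: Delta_rep_def)

lemma Delta_rep_add: "Delta_rep n (a + b) = Delta_rep n a @ Delta_rep n b"
  by (simp add: Delta_rep_def replicate_add)

lemma Delta_positive: "positive_word (Delta n)"
  using pos_valid_Delta[of n n] by (simp add: pos_valid_def)

lemma pos_valid_Delta_rep: "pos_valid n (Delta_rep n K)"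
  by (induction K) (auto simp: Delta_rep_def pos_valid_Delta)

lemma length_Delta_pos: "2 \<le> n \<Longrightarrow> 1 \<le> length (Delta n)"
  by (cases n) (auto simp: Delta_Suc sigma_run_def)

lemma valid_word_Delta_inv_rep: "valid_word n (Delta_inv_rep n j)"
  using valid_word_winv[OF sigma_word_Delta] by (induction j) (auto simp: Delta_inv_rep_def valid_word_def)

lemma valid_word_Delta_pow: "valid_word n (Delta_pow n m)"
  using pos_valid_Delta_rep valid_word_Delta_inv_rep
  by (cases "0 \<le> m") (auto simp: Delta_pow_nonneg Delta_pow_neg pos_valid_def)

lemma concat_replicate_snoc: "concat (replicate j X) @ X = concat (replicate (Suc j) X)"
  by (induction j) auto

lemma Delta_pow_winv_Delta: "sb_eq n (Delta_pow n m @ winv (Delta n)) (Delta_pow n (m - 1))"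
proof (cases "m \<le> 0")
  case True
  have "Delta_pow n m @ winv (Delta n) = Delta_inv_rep n (Suc (nat (- m)))"
    using True concat_replicate_snoc[of "nat (- m)" "winv (Delta n)"]
    by (cases "m = 0") (auto simp: Delta_pow_def Delta_inv_rep_def)
  moreover have "Delta_pow n (m - 1) = Delta_inv_rep n (Suc (nat (- m)))"
    using True by (simp add: Delta_pow_def Delta_inv_rep_def nat_diff_distrib' Suc_nat_eq_nat_zadd1)
  ultimately show ?thesis by simp
next
  case False
  obtain j where j: "nat m = Suc j" using False by (cases "nat m") auto
  have "Delta_pow n m = Delta_rep n j @ Delta n"
    using False j concat_replicate_snoc[of j "Delta n"] by (simp add: Delta_pow_def Delta_rep_def)
  moreover have "Delta_pow n (m - 1) = Delta_rep n j"
    using False j by (simp add: Delta_pow_def Delta_rep_def nat_diff_distrib')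
  ultimately show ?thesis
    using sb_eq_append_left[OF sb_eq_winv_right[OF sigma_word_Delta], where p = "Delta_rep n j"] by simp
qed

lemma Delta_pow_Delta: "sb_eq n (Delta_pow n m @ Delta n) (Delta_pow n (m + 1))"
proof (cases "m < 0")
  case True
  obtain j where j: "nat (- m) = Suc j" using True by (cases "nat (- m)") auto
  have "Delta_pow n m = Delta_inv_rep n j @ winv (Delta n)"
    using True j concat_replicate_snoc[of j "winv (Delta n)"] by (simp add: Delta_pow_def Delta_inv_rep_def)
  moreover have "Delta_pow n (m + 1) = Delta_inv_rep n j"
    using True j by (auto simp: Delta_pow_def Delta_inv_rep_def nat_eq_iff)
  ultimately show ?thesis
    using sb_eq_append_left[OF sb_eq_winv_left[OF sigma_word_Delta], where p = "Delta_inv_rep n j"] by simp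
next
  case False
  then show ?thesis
    using concat_replicate_snoc[of "nat m" "Delta n"] by (simp add: Delta_pow_def nat_add_distrib)
qed

lemma rev_concat_replicate: "rev (concat (replicate j X)) = concat (replicate j (rev X))"
proof (induction j)
  case (Suc j)
  have "rev (concat (replicate (Suc j) X)) = rev (concat (replicate j X)) @ rev X" by simp
  also have "\<dots> = concat (replicate (Suc j) (rev X))" using Suc concat_replicate_snoc by simp
  finally show ?case .
qed simp

lemma sb_eq_rev_Delta_pow: "sb_eq n (rev (Delta_pow n m)) (Delta_pow n m)"
proof -
  have "sb_eq n (concat (replicate j X)) (concat (replicate j Y))" if "sb_eq n X Y" for j X Y
    using that by (induction j) (auto intro: sb_eq_append)
  moreover have "sb_eq n (rev (Delta n)) (Delta n)"
    using sb_eq_of_pos_eq[OF pos_eq_rev_Delta[of n n]] by simp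
  moreover have "sb_eq n (winv (rev (Delta n))) (winv (Delta n))"
    using sb_eq_winv_of_pos_eq[OF _ sigma_word_Delta pos_eq_rev_Delta[of n n]] sigma_word_Delta[of n]
    by (simp add: sigma_word_def)
  moreover have "rev (winv (Delta n)) = winv (rev (Delta n))"
    by (simp add: winv_def rev_map)
  ultimately show ?thesis by (simp add: Delta_pow_def rev_concat_replicate)
qed

section \<open>Clearing denominators\<close>

definition flip_pow :: "nat \<Rightarrow> nat \<Rightarrow> word \<Rightarrow> word" where
  "flip_pow n K W = (if even K then W else map (flip n) W)"

definition Delta_quot :: "nat \<Rightarrow> nat \<Rightarrow> word" where
  "Delta_quot n i = (SOME D. pos_valid n D \<and> pos_eq n (Delta n) (D @ [Sg i]))"

fun inv_count :: "word \<Rightarrow> nat" where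
  "inv_count [] = 0"
| "inv_count (Si i # W) = Suc (inv_count W)"
| "inv_count (Sg i # W) = inv_count W"
| "inv_count (Xg i # W) = inv_count W"

text \<open>\<^term>\<open>positivise n K W\<close> is a positive word representing \<open>\<Delta>\<^sup>K W\<close> as long as
  \<open>K \<ge> inv_count W\<close>: each \<open>\<sigma>\<^sub>i\<^sup>-\<^sup>1\<close> absorbs one factor \<open>\<Delta> = D\<^sub>i \<sigma>\<^sub>i\<close>, and the
  remaining powers of \<open>\<Delta>\<close> are moved to the right, conjugating the letters they pass.\<close>

fun positivise :: "nat \<Rightarrow> nat \<Rightarrow> word \<Rightarrow> word" where
  "positivise n K [] = Delta_rep n K"
| "positivise n K (Si i # W) = flip_pow n (K - 1) (Delta_quot n i) @ positivise n (K - 1) W"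
| "positivise n K (Sg i # W) = flip_pow n K [Sg i] @ positivise n K W"
| "positivise n K (Xg i # W) = flip_pow n K [Xg i] @ positivise n K W"

lemma inv_count_append [simp]: "inv_count (u @ v) = inv_count u + inv_count v"
  by (induction u rule: inv_count.induct) auto

lemma inv_count_pos: "positive_word p \<Longrightarrow> inv_count p = 0"
  by (induction p rule: inv_count.induct) (auto simp: positive_word_def)

lemma inv_count_winv: "sigma_word n W \<Longrightarrow> inv_count (winv W) = length W"
  by (induction W) (auto simp: sigma_word_def winv_Cons)

lemma inv_count_concat_replicate: "inv_count (concat (replicate j X)) = j * inv_count X"
  by (induction j) auto

lemma inv_count_Delta_inv_rep: "inv_count (Delta_inv_rep n j) = j * length (Delta n)"
  using inv_count_winv[OF sigma_word_Delta] by (simp add: Delta_inv_rep_def inv_count_concat_replicate)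

lemma inv_count_Delta_pow: "inv_count (Delta_pow n m) = nat (- m) * length (Delta n)"
  using inv_count_pos[OF Delta_positive] inv_count_winv[OF sigma_word_Delta]
  by (simp add: Delta_pow_def inv_count_concat_replicate)

lemma flip_pow_Cons: "flip_pow n K (a # v) = flip_pow n K [a] @ flip_pow n K v"
  by (simp add: flip_pow_def)

lemma pos_valid_flip_pow: "pos_valid n W \<Longrightarrow> pos_valid n (flip_pow n K W)"
  by (simp add: flip_pow_def pos_valid_flip)

lemma pos_eq_flip_pow: "pos_eq n u v \<Longrightarrow> pos_eq n (flip_pow n K u) (flip_pow n K v)"
  by (simp add: flip_pow_def pos_eq_flip)

lemma flip_pow_Delta: "pos_eq n (flip_pow n K (Delta n)) (Delta n)"
  by (simp add: flip_pow_def flip_Delta)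

lemma flip_pow_Suc_append_Delta:
  assumes "pos_valid n X"
  shows "pos_eq n (flip_pow n (Suc K) X @ Delta n) (Delta n @ flip_pow n K X)"
  using word_Delta[OF assms] word_Delta[OF pos_valid_flip[OF assms]] map_flip_flip[OF assms]
  by (simp add: flip_pow_def)

lemma Delta_quot_spec:
  "1 \<le> i \<Longrightarrow> i + 1 \<le> n \<Longrightarrow> pos_valid n (Delta_quot n i) \<and> pos_eq n (Delta n) (Delta_quot n i @ [Sg i])"
  unfolding Delta_quot_def by (rule someI_ex) (rule Delta_right_divisible)

lemma flip_Sg_Delta_quot:
  assumes i: "1 \<le> i" "i + 1 \<le> n"
  shows "pos_eq n (flip n (Sg i) # Delta_quot n i) (Delta n)"
proof -
  have D: "pos_valid n (Delta_quot n i)" "pos_eq n (Delta n) (Delta_quot n i @ [Sg i])"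
    using Delta_quot_spec[OF i] by auto
  have s: "pos_letter n (Sg i)" using i by (simp add: pos_letter_def)
  have "pos_eq n ((flip n (Sg i) # Delta_quot n i) @ [Sg i]) (flip n (Sg i) # Delta n)"
    using pos_eq_Cons[OF pos_eq_sym[OF D(2)]] by simp
  also have "pos_eq n (flip n (Sg i) # Delta n) (Delta n @ [Sg i])"
    using letter_Delta[OF pos_letter_flip[OF s]] flip_flip[OF s] by simp
  finally have "pos_eq n ((flip n (Sg i) # Delta_quot n i) @ [Sg i]) (Delta n @ [Sg i])" .
  moreover have "pos_valid n ((flip n (Sg i) # Delta_quot n i) @ [Sg i])"
    using D(1) s pos_letter_flip[OF s] by simp
  ultimately show ?thesis using pos_eq_right_cancel by blast
qed

lemma positivise_pos_append:
  "positive_word p \<Longrightarrow> positivise n K (p @ X) = flip_pow n K p @ positivise n K X"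
proof (induction p)
  case (Cons a p)
  then show ?case
    by (cases a) (auto simp: positive_word_def flip_pow_Cons[of n K _ p])
qed (simp add: flip_pow_def)

lemma pos_valid_positivise: "valid_word n W \<Longrightarrow> pos_valid n (positivise n K W)"
proof (induction n K W rule: positivise.induct)
  case (2 n K i W)
  then have "1 \<le> i" "i + 1 \<le> n" by (auto simp: valid_word_def)
  then show ?case using 2 Delta_quot_spec pos_valid_flip_pow by (auto simp: valid_word_def)
qed (auto simp: pos_valid_Delta_rep valid_word_def pos_letter_def flip_pow_def pos_valid_flip)

lemma positivise_Suc:
  "valid_word n W \<Longrightarrow> inv_count W \<le> K \<Longrightarrow>
   pos_eq n (positivise n (Suc K) W) (Delta n @ positivise n K W)"
proof (induction W arbitrary: K)
  case Nil then show ?case by (simp add: Delta_rep_Suc)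
next
  case (Cons a W)
  show ?case
  proof (cases "is_pos_letter a")
    case True
    then have a: "pos_letter n a" and W: "valid_word n W" "inv_count W \<le> K"
      and rec: "\<And>L. positivise n L (a # W) = flip_pow n L [a] @ positivise n L W"
      using Cons.prems by (cases a; auto simp: valid_word_def pos_letter_def)+
    have "pos_eq n (positivise n (Suc K) (a # W)) (flip_pow n (Suc K) [a] @ Delta n @ positivise n K W)"
      using pos_eq_append_left[OF Cons.IH[OF W]] rec by simp
    also have "pos_eq n \<dots> (Delta n @ flip_pow n K [a] @ positivise n K W)"
      using pos_eq_append_right[OF flip_pow_Suc_append_Delta[of n "[a]" K]] a by simp
    finally show ?thesis using rec by simp
  next
    case False
    then obtain i where Si: "a = Si i" by (cases a) auto
    then obtain K' where K: "K = Suc K'" using Cons.prems by (cases K) auto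
    have i: "1 \<le> i" "i + 1 \<le> n" and W: "valid_word n W" "inv_count W \<le> K'"
      using Cons.prems Si K by (auto simp: valid_word_def)
    have "pos_eq n (positivise n (Suc K) (a # W)) (flip_pow n K (Delta_quot n i) @ Delta n @ positivise n K' W)"
      using pos_eq_append_left[OF Cons.IH[OF W]] Si K by simp
    also have "pos_eq n \<dots> (Delta n @ flip_pow n K' (Delta_quot n i) @ positivise n K' W)"
      using pos_eq_append_right[OF flip_pow_Suc_append_Delta[OF conjunct1[OF Delta_quot_spec[OF i]], of K']] K
      by simp
    finally show ?thesis using Si K by simp
  qed
qed

lemma positivise_rel:
  assumes R: "prel n u v \<or> irel n u v" and q: "valid_word n q"
    and K: "inv_count (u @ q) \<le> K" "inv_count (v @ q) \<le> K"
  shows "pos_eq n (positivise n K (u @ q)) (positivise n K (v @ q))"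
  using R
proof
  assume uv: "prel n u v"
  then have "positive_word u" "positive_word v" using prel_pos_valid by (auto simp: pos_valid_def)
  then show ?thesis
    using positivise_pos_append pos_eq_append_right[OF pos_eq_flip_pow[OF pos_eq_of_prel[OF uv]]] by metis
next
  assume "irel n u v"
  then obtain i where i: "1 \<le> i" "i \<le> n - 1" and v: "v = []"
    and u: "u = [Sg i, Si i] \<or> u = [Si i, Sg i]"
    by (cases rule: irel.cases) auto
  then have i: "1 \<le> i" "i + 1 \<le> n" by linarith+
  obtain J where J: "K = Suc J" "inv_count q \<le> J" using K u by (cases K) auto
  have s: "pos_letter n (Sg i)" using i by (simp add: pos_letter_def)
  have D1: "pos_eq n (flip_pow n J (flip n (Sg i) # Delta_quot n i)) (Delta n)"
    using pos_eq_trans[OF pos_eq_flip_pow[OF flip_Sg_Delta_quot[OF i]] flip_pow_Delta] .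
  have D2: "pos_eq n (flip_pow n J (Delta_quot n i @ [Sg i])) (Delta n)"
    using pos_eq_trans[OF pos_eq_flip_pow[OF pos_eq_sym[OF conjunct2[OF Delta_quot_spec[OF i]]]] flip_pow_Delta] .
  consider "positivise n K (u @ q) = flip_pow n J (flip n (Sg i) # Delta_quot n i) @ positivise n J q"
    | "positivise n K (u @ q) = flip_pow n J (Delta_quot n i @ [Sg i]) @ positivise n J q"
    using u J flip_flip[OF s] by (auto simp: flip_pow_def)
  then have "pos_eq n (positivise n K (u @ q)) (Delta n @ positivise n J q)"
    using pos_eq_append_right[OF D1] pos_eq_append_right[OF D2] by cases simp_all
  also have "pos_eq n (Delta n @ positivise n J q) (positivise n K (v @ q))"
    using pos_eq_sym[OF positivise_Suc[OF q J(2)]] J v by simp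
  finally show ?thesis .
qed

lemma positivise_step:
  assumes R: "prel n u v \<or> irel n u v"
  shows "valid_word n (p @ u @ q) \<Longrightarrow> inv_count (p @ u @ q) \<le> K \<Longrightarrow> inv_count (p @ v @ q) \<le> K \<Longrightarrow>
    pos_eq n (positivise n K (p @ u @ q)) (positivise n K (p @ v @ q))"
proof (induction p arbitrary: K)
  case Nil
  then show ?case using positivise_rel[OF R] by simp
next
  case (Cons a p)
  then show ?case by (cases a) (auto intro!: pos_eq_append_left simp: valid_word_def)
qed

lemma positivise_sb_eq_eventually:
  "sb_eq n W1 W2 \<Longrightarrow> valid_word n W1 \<Longrightarrow>
   \<exists>K0. \<forall>K\<ge>K0. pos_eq n (positivise n K W1) (positivise n K W2)"
  unfolding sb_eq_def
proof (induction rule: word_cong.induct)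
  case (step u v p q)
  then show ?case
    using positivise_step[OF step(1) step(2)]
    by (intro exI[of _ "inv_count (p @ u @ q) + inv_count (p @ v @ q)"]) auto
next
  case (sym u v)
  then show ?case using sb_eq_valid_word[unfolded sb_eq_def] pos_eq_sym by metis
next
  case (trans u v w)
  then obtain K1 K2 where "\<forall>K\<ge>K1. pos_eq n (positivise n K u) (positivise n K v)"
    "\<forall>K\<ge>K2. pos_eq n (positivise n K v) (positivise n K w)"
    using sb_eq_valid_word[unfolded sb_eq_def] by metis
  then show ?case using pos_eq_trans by (intro exI[of _ "max K1 K2"]) auto
qed auto

lemma positivise_cancel_Delta:
  assumes W: "valid_word n W1" "valid_word n W2" "inv_count W1 \<le> K" "inv_count W2 \<le> K"
    and eq: "pos_eq n (positivise n (K + j) W1) (positivise n (K + j) W2)"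
  shows "pos_eq n (positivise n K W1) (positivise n K W2)"
  using eq
proof (induction j)
  case (Suc j)
  have "pos_eq n (Delta n @ positivise n (K + j) W1) (Delta n @ positivise n (K + j) W2)"
    using pos_eq_trans[OF pos_eq_sym[OF positivise_Suc[OF W(1)]] pos_eq_trans[OF _ positivise_Suc[OF W(2)]]]
      Suc.prems W(3,4) by simp
  then show ?case
    using Suc.IH pos_eq_left_cancel pos_valid_positivise[OF W(1)] pos_valid_Delta[of n n]
    by (metis order_refl pos_valid_append)
qed simp

theorem positivise_sb_eq:
  assumes "sb_eq n W1 W2" "valid_word n W1" "inv_count W1 \<le> K" "inv_count W2 \<le> K"
  shows "pos_eq n (positivise n K W1) (positivise n K W2)"
proof -
  obtain K0 where "\<forall>K\<ge>K0. pos_eq n (positivise n K W1) (positivise n K W2)"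
    using positivise_sb_eq_eventually[OF assms(1,2)] by blast
  moreover have "valid_word n W2" using sb_eq_valid_word[OF assms(1)] assms(2) by simp
  ultimately show ?thesis using positivise_cancel_Delta[OF assms(2) _ assms(3,4), of K0] by simp
qed

section \<open>Decompositions \<open>\<Delta>\<^sup>m A\<close>\<close>

lemma positivise_positive: "pos_valid n A \<Longrightarrow> pos_eq n (positivise n K A) (Delta_rep n K @ A)"
proof (induction K)
  case 0
  then show ?case
    using positivise_pos_append[of A n 0 "[]"] by (simp add: pos_valid_def flip_pow_def Delta_rep_def)
next
  case (Suc K)
  then have "pos_eq n (positivise n (Suc K) A) (flip_pow n (Suc K) A @ Delta n @ Delta_rep n K)"
    using positivise_pos_append[of A n _ "[]"] by (simp add: pos_valid_def Delta_rep_Suc)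
  also have "pos_eq n \<dots> (Delta n @ flip_pow n K A @ Delta_rep n K)"
    using pos_eq_append_right[OF flip_pow_Suc_append_Delta[OF Suc.prems]] by simp
  also have "pos_eq n \<dots> (Delta_rep n (Suc K) @ A)"
    using pos_eq_append_left[OF Suc.IH[OF Suc.prems]] positivise_pos_append[of A n K "[]"] Suc.prems
    by (simp add: pos_valid_def Delta_rep_Suc)
  finally show ?case .
qed

lemma positivise_winv_Delta:
  assumes n: "2 \<le> n" and Y: "valid_word n Y" and K: "length (Delta n) + inv_count Y \<le> K"
  shows "pos_eq n (positivise n K (winv (Delta n) @ Y)) (positivise n (K - 1) Y)"
proof -
  have W: "valid_word n (winv (Delta n) @ Y)" using valid_word_winv[OF sigma_word_Delta] Y by simp
  obtain J where J: "K = Suc J" "inv_count Y \<le> J" using K length_Delta_pos[OF n] by (cases K) auto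
  have "sb_eq n (Delta n @ winv (Delta n) @ Y) Y"
    using sb_eq_append_right[OF sb_eq_winv_right[OF sigma_word_Delta], of n Y] by simp
  moreover have "valid_word n (Delta n @ winv (Delta n) @ Y)"
    using W pos_valid_Delta[of n n] by (simp add: pos_valid_def)
  moreover have "inv_count (Delta n @ winv (Delta n) @ Y) \<le> K"
    using K inv_count_winv[OF sigma_word_Delta] inv_count_pos[OF Delta_positive] by simp
  ultimately have e: "pos_eq n (positivise n K (Delta n @ winv (Delta n) @ Y)) (positivise n K Y)"
    using positivise_sb_eq K by simp
  have "pos_eq n (Delta n @ positivise n K (winv (Delta n) @ Y))
      (flip_pow n K (Delta n) @ positivise n K (winv (Delta n) @ Y))"
    using pos_eq_append_right[OF pos_eq_sym[OF flip_pow_Delta]] .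
  also have "\<dots> = positivise n K (Delta n @ winv (Delta n) @ Y)"
    using positivise_pos_append[OF Delta_positive] by simp
  also have "pos_eq n \<dots> (positivise n K Y)" using e .
  also have "pos_eq n \<dots> (Delta n @ positivise n (K - 1) Y)" using positivise_Suc[OF Y J(2)] J by simp
  finally show ?thesis
    using pos_eq_left_cancel pos_valid_positivise[OF W] pos_valid_Delta[of n n] by (metis order_refl pos_valid_append)
qed

lemma positivise_Delta_inv_rep:
  assumes n: "2 \<le> n" and Y: "valid_word n Y"
  shows "j * length (Delta n) + inv_count Y \<le> K \<Longrightarrow>
    pos_eq n (positivise n K (Delta_inv_rep n j @ Y)) (positivise n (K - j) Y)"
proof (induction j arbitrary: K)
  case (Suc j)
  have "valid_word n (Delta_inv_rep n j @ Y)" using valid_word_Delta_inv_rep Y by simp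
  moreover have "inv_count (Delta_inv_rep n j @ Y) = j * length (Delta n) + inv_count Y"
    using inv_count_Delta_inv_rep by simp
  ultimately have "pos_eq n (positivise n K (Delta_inv_rep n (Suc j) @ Y))
      (positivise n (K - 1) (Delta_inv_rep n j @ Y))"
    using positivise_winv_Delta[OF n] Suc.prems by (simp add: Delta_inv_rep_def)
  also have "pos_eq n \<dots> (positivise n (K - Suc j) Y)"
    using Suc.IH[of "K - 1"] Suc.prems length_Delta_pos[OF n] by (simp add: algebra_simps)
  finally show ?case .
qed (simp add: Delta_inv_rep_def)

lemma positivise_Delta_pow:
  assumes n: "2 \<le> n" and A: "pos_valid n A" and K: "nat (- m) * length (Delta n) \<le> K"
  shows "pos_eq n (positivise n K (Delta_pow n m @ A)) (Delta_rep n (nat (int K + m)) @ A)"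
proof (cases "0 \<le> m")
  case True
  then show ?thesis
    using positivise_positive[of n "Delta_rep n (nat m) @ A" K] A pos_valid_Delta_rep
    by (simp add: Delta_pow_nonneg Delta_rep_add nat_add_distrib)
next
  case False
  have "nat (- m) \<le> K" using K length_Delta_pos[OF n] by (metis le_trans mult.right_neutral mult_le_mono2)
  then have "nat (int K + m) = K - nat (- m)" using False by simp
  moreover have "valid_word n A" "inv_count A = 0" using A inv_count_pos by (auto simp: pos_valid_def)
  ultimately show ?thesis
    using pos_eq_trans[OF positivise_Delta_inv_rep[OF n, of A "nat (- m)" K] positivise_positive[OF A]] K False
    by (simp add: Delta_pow_neg)
qed

definition Delta_not_left_div :: "nat \<Rightarrow> word \<Rightarrow> bool" where
  "Delta_not_left_div n X \<longleftrightarrow> \<not> (\<exists>Z. positive_word Z \<and> pos_eq n X (Delta n @ Z))"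

definition Delta_not_right_div :: "nat \<Rightarrow> word \<Rightarrow> bool" where
  "Delta_not_right_div n X \<longleftrightarrow> \<not> (\<exists>Z. positive_word Z \<and> pos_eq n X (Z @ Delta n))"

lemma Delta_not_left_div_rev: "Delta_not_left_div n (rev X) \<longleftrightarrow> Delta_not_right_div n X"
proof -
  have iff: "pos_eq n (rev X) (Delta n @ Z) \<longleftrightarrow> pos_eq n X (rev Z @ Delta n)" for Z
  proof -
    have D: "pos_eq n (Delta n @ Z) (rev (rev Z @ Delta n))"
      using pos_eq_append_right[OF pos_eq_sym[OF pos_eq_rev_Delta[of n n]]] by simp
    have "pos_eq n (rev X) (Delta n @ Z) \<longleftrightarrow> pos_eq n (rev X) (rev (rev Z @ Delta n))"
      using pos_eq_trans[OF _ D] pos_eq_trans[OF _ pos_eq_sym[OF D]] by blast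
    then show ?thesis using pos_eq_rev_iff by blast
  qed
  have "(\<exists>Z. positive_word Z \<and> pos_eq n (rev X) (Delta n @ Z)) \<longleftrightarrow>
        (\<exists>Z. positive_word Z \<and> pos_eq n X (Z @ Delta n))"
  proof
    assume "\<exists>Z. positive_word Z \<and> pos_eq n (rev X) (Delta n @ Z)"
    then obtain Z where "positive_word Z" "pos_eq n X (rev Z @ Delta n)" using iff by blast
    moreover have "positive_word (rev Z)" using \<open>positive_word Z\<close> by (simp add: positive_word_def)
    ultimately show "\<exists>Z. positive_word Z \<and> pos_eq n X (Z @ Delta n)" by blast
  next
    assume "\<exists>Z. positive_word Z \<and> pos_eq n X (Z @ Delta n)"
    then obtain Z where "positive_word Z" "pos_eq n X (Z @ Delta n)" by blast
    moreover have "positive_word (rev Z)" using \<open>positive_word Z\<close> by (simp add: positive_word_def)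
    ultimately show "\<exists>Z. positive_word Z \<and> pos_eq n (rev X) (Delta n @ Z)"
      using iff[of "rev Z"] by auto
  qed
  then show ?thesis unfolding Delta_not_left_div_def Delta_not_right_div_def by blast
qed

lemma Delta_rep_cancel:
  assumes A: "pos_valid n A" "pos_valid n A'" and nd: "Delta_not_left_div n A" "Delta_not_left_div n A'"
    and eq: "pos_eq n (Delta_rep n a @ A) (Delta_rep n a' @ A')"
  shows "a = a' \<and> pos_eq n A A'"
proof -
  have le: "d = 0 \<and> pos_eq n B B'"
    if B: "pos_valid n B" "pos_valid n B'" "Delta_not_left_div n B"
      and eq: "pos_eq n (Delta_rep n b @ B) (Delta_rep n (b + d) @ B')" for b d B B'
  proof -
    have "pos_eq n B (Delta_rep n d @ B')"
      using eq pos_eq_left_cancel[of n "Delta_rep n b" B "Delta_rep n d @ B'"] pos_valid_Delta_rep B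
      by (simp add: Delta_rep_add)
    moreover have "pos_valid n (Delta_rep n (d - 1) @ B')" using pos_valid_Delta_rep B by simp
    then have "positive_word (Delta_rep n (d - 1) @ B')" by (simp add: pos_valid_def)
    ultimately show ?thesis
      using B(3) unfolding Delta_not_left_div_def
      by (cases d) (auto simp: Delta_rep_Suc, simp add: Delta_rep_def)
  qed
  show ?thesis
  proof (cases "a \<le> a'")
    case True
    then show ?thesis using le[OF A nd(1), of a "a' - a"] eq by simp
  next
    case False
    then show ?thesis using le[OF A(2,1) nd(2), of a' "a - a'"] pos_eq_sym[OF eq] pos_eq_sym by simp
  qed
qed

theorem left_Delta_decomposition_unique:
  assumes n: "2 \<le> n" and A: "pos_valid n A" "pos_valid n A'"
    and nd: "Delta_not_left_div n A" "Delta_not_left_div n A'"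
    and eq: "sb_eq n (Delta_pow n m @ A) (Delta_pow n m' @ A')"
  shows "m = m' \<and> pos_eq n A A'"
proof -
  define K where "K = (nat (- m) + nat (- m')) * length (Delta n)"
  have K: "nat (- m) * length (Delta n) \<le> K" "nat (- m') * length (Delta n) \<le> K"
    unfolding K_def by (simp_all add: algebra_simps)
  have "pos_eq n (positivise n K (Delta_pow n m @ A)) (positivise n K (Delta_pow n m' @ A'))"
    using positivise_sb_eq[OF eq] valid_word_Delta_pow K A inv_count_pos inv_count_Delta_pow
    by (simp add: pos_valid_def)
  then have "pos_eq n (Delta_rep n (nat (int K + m)) @ A) (Delta_rep n (nat (int K + m')) @ A')"
    using positivise_Delta_pow[OF n A(1) K(1)] positivise_Delta_pow[OF n A(2) K(2)] pos_eq_trans pos_eq_sym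
    by metis
  then have r: "nat (int K + m) = nat (int K + m') \<and> pos_eq n A A'"
    using Delta_rep_cancel[OF A nd] by blast
  have "nat (- m) \<le> K" "nat (- m') \<le> K"
    using K length_Delta_pos[OF n] by (metis le_trans mult.right_neutral mult_le_mono2)+
  then show ?thesis using r by linarith
qed

lemma Si_eq_Delta_inv:
  assumes i: "1 \<le> i" "i + 1 \<le> n"
  obtains E where "pos_valid n E" "sb_eq n [Si i] (E @ winv (Delta n))"
proof -
  obtain E where E: "pos_valid n E" "pos_eq n (Delta n) (Sg i # E)" using Delta_left_divisible[OF i] by blast
  have "sb_eq n [Si i] ([Si i] @ Delta n @ winv (Delta n))"
    using sb_eq_append_left[OF sb_eq_sym[OF sb_eq_winv_right[OF sigma_word_Delta]], of n "[Si i]"] by simp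
  also have "sb_eq n \<dots> ([Si i, Sg i] @ E @ winv (Delta n))"
    using sb_eq_append_left[OF sb_eq_append_right[OF sb_eq_of_pos_eq[OF E(2)]], of "[Si i]"] by simp
  also have "sb_eq n \<dots> ([] @ E @ winv (Delta n))"
    using i by (intro sb_eq_append_right sb_eq_of_irel) (auto intro: irel.intros)
  finally show ?thesis using that E(1) by simp
qed

lemma winv_Delta_commute:
  assumes X: "pos_valid n X"
  shows "sb_eq n (X @ winv (Delta n)) (winv (Delta n) @ map (flip n) X)"
proof -
  let ?D = "Delta n" and ?X = "map (flip n) X"
  have "pos_eq n (?X @ ?D) (?D @ X)"
    using word_Delta[OF pos_valid_flip[OF X]] map_flip_flip[OF X] by simp
  then have "sb_eq n (winv ?D @ ?X @ ?D @ winv ?D) (winv ?D @ ?D @ X @ winv ?D)"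
    using sb_eq_append_left[OF sb_eq_append_right[OF sb_eq_of_pos_eq], of n "?X @ ?D" "?D @ X" "winv ?D"]
    by simp
  moreover have "sb_eq n (winv ?D @ ?X @ ?D @ winv ?D) (winv ?D @ ?X)"
    using sb_eq_append_left[OF sb_eq_winv_right[OF sigma_word_Delta], of n "winv ?D @ ?X"] by simp
  moreover have "sb_eq n (winv ?D @ ?D @ X @ winv ?D) (X @ winv ?D)"
    using sb_eq_append_right[OF sb_eq_winv_left[OF sigma_word_Delta], of n "X @ winv ?D"] by simp
  ultimately show ?thesis using sb_eq_trans sb_eq_sym by metis
qed

lemma left_Delta_decomposition:
  "valid_word n W \<Longrightarrow> \<exists>m A. pos_valid n A \<and> sb_eq n W (Delta_pow n m @ A)"
proof (induction W rule: rev_induct)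
  case Nil
  then show ?case by (intro exI[of _ 0] exI[of _ "[]"]) (simp add: Delta_pow_def)
next
  case (snoc w W)
  then obtain m Q where Q: "pos_valid n Q" "sb_eq n W (Delta_pow n m @ Q)" by auto
  have w: "1 \<le> gidx w" "gidx w \<le> n - 1" using snoc.prems by (auto simp: valid_word_def)
  have W: "sb_eq n (W @ [w]) (Delta_pow n m @ Q @ [w])" using sb_eq_append_right[OF Q(2)] by simp
  show ?case
  proof (cases "is_pos_letter w")
    case True
    then have "pos_valid n (Q @ [w])" using Q(1) w by (simp add: pos_letter_def)
    then show ?thesis using W by (metis append.assoc)
  next
    case False
    then obtain i where Si: "w = Si i" by (cases w) auto
    then have i: "1 \<le> i" "i + 1 \<le> n" using w by auto
    obtain E where E: "pos_valid n E" "sb_eq n [Si i] (E @ winv (Delta n))" using Si_eq_Delta_inv[OF i] by blast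
    have "sb_eq n (W @ [w]) ((Delta_pow n m @ Q) @ [Si i])" using W Si by simp
    also have "sb_eq n \<dots> ((Delta_pow n m @ Q) @ E @ winv (Delta n))"
      using sb_eq_append_left[OF E(2)] .
    also have "\<dots> = Delta_pow n m @ (Q @ E) @ winv (Delta n)" by simp
    also have "sb_eq n \<dots> ((Delta_pow n m @ winv (Delta n)) @ map (flip n) (Q @ E))"
      using sb_eq_append_left[OF winv_Delta_commute[of n "Q @ E"]] Q(1) E(1) by simp
    also have "sb_eq n \<dots> (Delta_pow n (m - 1) @ map (flip n) (Q @ E))"
      using sb_eq_append_right[OF Delta_pow_winv_Delta] .
    finally have "sb_eq n (W @ [w]) (Delta_pow n (m - 1) @ map (flip n) (Q @ E))" .
    moreover have "pos_valid n (map (flip n) (Q @ E))" using pos_valid_flip Q(1) E(1) by simp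
    ultimately show ?thesis by blast
  qed
qed

text \<open>Taking \<open>A\<close> of minimal length forbids \<open>A = \<Delta> Z\<close>, which would give the shorter
  decomposition \<open>\<Delta>\<^sup>m\<^sup>+\<^sup>1 Z\<close>.\<close>

theorem left_Delta_decomposition_reduced:
  assumes n: "2 \<le> n" and W: "valid_word n W"
  shows "\<exists>m A. pos_valid n A \<and> Delta_not_left_div n A \<and> sb_eq n W (Delta_pow n m @ A)"
proof -
  let ?P = "\<lambda>p. pos_valid n (snd p) \<and> sb_eq n W (Delta_pow n (fst p) @ snd p)"
  obtain m0 A0 where "?P (m0, A0)" using left_Delta_decomposition[OF W] by auto
  then obtain m A where mA: "?P (m, A)" and min: "\<And>q. ?P q \<Longrightarrow> length A \<le> length (snd q)"
    using ex_has_least_nat[of ?P "(m0, A0)" "\<lambda>p. length (snd p)"] by fastforce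
  have "Delta_not_left_div n A"
    unfolding Delta_not_left_div_def
  proof
    assume "\<exists>Z. positive_word Z \<and> pos_eq n A (Delta n @ Z)"
    then obtain Z where Z: "pos_eq n A (Delta n @ Z)" by blast
    have "sb_eq n W (Delta_pow n m @ A)" using mA by simp
    also have "sb_eq n \<dots> ((Delta_pow n m @ Delta n) @ Z)"
      using sb_eq_append_left[OF sb_eq_of_pos_eq[OF Z]] by simp
    also have "sb_eq n \<dots> (Delta_pow n (m + 1) @ Z)" using sb_eq_append_right[OF Delta_pow_Delta] .
    finally have "?P (m + 1, Z)" using pos_eq_pos_valid[OF Z] mA by simp
    from min[OF this] show False using pos_eq_length[OF Z] length_Delta_pos[OF n] by simp
  qed
  then show ?thesis using mA by auto
qed

theorem right_Delta_decomposition_reduced: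
  assumes n: "2 \<le> n" and W: "valid_word n W"
  shows "\<exists>m A. pos_valid n A \<and> Delta_not_right_div n A \<and> sb_eq n W (A @ Delta_pow n m)"
proof -
  have "valid_word n (rev W)" using W by (simp add: valid_word_def)
  then obtain m A where A: "pos_valid n A" "Delta_not_left_div n A" "sb_eq n (rev W) (Delta_pow n m @ A)"
    using left_Delta_decomposition_reduced[OF n] by blast
  have "sb_eq n W (rev A @ rev (Delta_pow n m))" using sb_eq_rev[OF A(3)] by simp
  also have "sb_eq n \<dots> (rev A @ Delta_pow n m)" using sb_eq_append_left[OF sb_eq_rev_Delta_pow] .
  finally have "sb_eq n W (rev A @ Delta_pow n m)" .
  moreover have "pos_valid n (rev A)" "Delta_not_right_div n (rev A)"
    using A(1,2) Delta_not_left_div_rev[of n "rev A"] by simp_all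
  ultimately show ?thesis by blast
qed

theorem right_Delta_decomposition_unique:
  assumes n: "2 \<le> n" and A: "pos_valid n A" "pos_valid n A'"
    and nd: "Delta_not_right_div n A" "Delta_not_right_div n A'"
    and eq: "sb_eq n (A @ Delta_pow n m) (A' @ Delta_pow n m')"
  shows "m = m' \<and> pos_eq n A A'"
proof -
  have "sb_eq n (Delta_pow n m @ rev A) (rev (Delta_pow n m) @ rev A)"
    using sb_eq_append_right[OF sb_eq_sym[OF sb_eq_rev_Delta_pow]] .
  also have "sb_eq n \<dots> (rev (Delta_pow n m') @ rev A')" using sb_eq_rev[OF eq] by simp
  also have "sb_eq n \<dots> (Delta_pow n m' @ rev A')" using sb_eq_append_right[OF sb_eq_rev_Delta_pow] .
  finally have "sb_eq n (Delta_pow n m @ rev A) (Delta_pow n m' @ rev A')" .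
  moreover have "pos_valid n (rev A)" "pos_valid n (rev A')"
    "Delta_not_left_div n (rev A)" "Delta_not_left_div n (rev A')"
    using A nd Delta_not_left_div_rev by simp_all
  ultimately have "m = m' \<and> pos_eq n (rev A) (rev A')"
    using left_Delta_decomposition_unique[OF n] by blast
  then show ?thesis using pos_eq_rev_iff by blast
qed

section \<open>Bases and normal forms\<close>

lemma lex_less_iff: "lex_less n xs ys \<longleftrightarrow> map (rank n) xs < map (rank n) ys"
  by (simp add: lex_less_def List.lexordp_def list_less_def)

lemma finite_pos_letters: "finite {g. pos_letter n g}"
proof (rule finite_subset)
  show "{g. pos_letter n g} \<subseteq> Sg ` {..<n} \<union> Xg ` {..<n}"
  proof
    fix g assume "g \<in> {g. pos_letter n g}"
    then show "g \<in> Sg ` {..<n} \<union> Xg ` {..<n}" by (cases g) (auto simp: pos_letter_def)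
  qed
qed simp

lemma inj_on_rank: "inj_on (rank n) {g. pos_letter n g}"
proof
  fix x y assume "x \<in> {g. pos_letter n g}" "y \<in> {g. pos_letter n g}" "rank n x = rank n y"
  then show "x = y" by (cases x; cases y) (auto simp: pos_letter_def)
qed

lemma own_base_exists:
  assumes A: "pos_valid n A"
  obtains B where "pos_eq n A B" "is_own_base n B"
proof -
  define S where "S = {B. positive_word B \<and> pos_eq n A B}"
  have "S \<subseteq> {xs. set xs \<subseteq> {g. pos_letter n g} \<and> length xs = length A}"
    using A pos_eq_pos_valid_length
    by (fastforce simp: S_def pos_valid_def pos_letter_def positive_word_def valid_word_def)
  then have "finite (map (rank n) ` S)"
    using finite_subset[OF _ finite_lists_length_eq[OF finite_pos_letters]] by blast
  moreover have "A \<in> S" using A by (simp add: S_def pos_valid_def)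
  ultimately have "Min (map (rank n) ` S) \<in> map (rank n) ` S"
    and min: "\<And>B'. B' \<in> S \<Longrightarrow> Min (map (rank n) ` S) \<le> map (rank n) B'"
    by (auto intro: Min_in Min_le)
  then obtain B where B: "B \<in> S" "map (rank n) B = Min (map (rank n) ` S)" by auto
  have "is_own_base n B"
    unfolding is_own_base_def lex_less_iff
  proof (intro conjI allI impI)
    show "positive_word B" using B by (simp add: S_def)
    fix B' assume "positive_word B' \<and> pos_eq n B B'"
    then have "B' \<in> S" using B pos_eq_trans by (auto simp: S_def)
    then show "\<not> map (rank n) B' < map (rank n) B" using min B(2) by (simp add: not_less)
  qed
  moreover have "pos_eq n A B" using B by (simp add: S_def)
  ultimately show ?thesis using that by blast
qed

lemma own_base_unique:
  assumes "pos_valid n B" "pos_valid n B'" "is_own_base n B" "is_own_base n B'" "pos_eq n B B'"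
  shows "B = B'"
proof -
  have "\<not> lex_less n B' B" "\<not> lex_less n B B'"
    using assms unfolding is_own_base_def by (auto simp: pos_valid_def pos_eq_sym)
  then have "map (rank n) B = map (rank n) B'" unfolding lex_less_iff by simp
  moreover have "set B \<union> set B' \<subseteq> {g. pos_letter n g}"
    using assms(1,2) by (auto simp: pos_valid_def pos_letter_def positive_word_def valid_word_def)
  ultimately show ?thesis using map_inj_on inj_on_subset[OF inj_on_rank] by blast
qed

lemma own_base_pos_valid: "is_own_base n A \<Longrightarrow> valid_word n A \<Longrightarrow> pos_valid n A"
  by (simp add: is_own_base_def pos_valid_def)

lemma is_left_nf_eq_iff:
  assumes n: "2 \<le> n" and nf: "is_left_nf n W m A" "is_left_nf n W' m' A'"
  shows "sb_eq n W W' \<longleftrightarrow> m = m' \<and> A = A'"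
proof
  assume "sb_eq n W W'"
  then have "sb_eq n (Delta_pow n m @ A) (Delta_pow n m' @ A')"
    using nf unfolding is_left_nf_def by (meson sb_eq_sym sb_eq_trans)
  moreover have "pos_valid n A" "pos_valid n A'" "Delta_not_left_div n A" "Delta_not_left_div n A'"
    using nf own_base_pos_valid unfolding is_left_nf_def Delta_not_left_div_def by auto
  ultimately show "m = m' \<and> A = A'"
    using left_Delta_decomposition_unique[OF n] own_base_unique nf unfolding is_left_nf_def by metis
next
  assume "m = m' \<and> A = A'"
  then show "sb_eq n W W'" using nf unfolding is_left_nf_def by (meson sb_eq_sym sb_eq_trans)
qed

lemma is_right_nf_eq_iff:
  assumes n: "2 \<le> n" and nf: "is_right_nf n W A m" "is_right_nf n W' A' m'"
  shows "sb_eq n W W' \<longleftrightarrow> A = A' \<and> m = m'"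
proof
  assume "sb_eq n W W'"
  then have "sb_eq n (A @ Delta_pow n m) (A' @ Delta_pow n m')"
    using nf unfolding is_right_nf_def by (meson sb_eq_sym sb_eq_trans)
  moreover have "pos_valid n A" "pos_valid n A'" "Delta_not_right_div n A" "Delta_not_right_div n A'"
    using nf own_base_pos_valid unfolding is_right_nf_def Delta_not_right_div_def by auto
  ultimately show "A = A' \<and> m = m'"
    using right_Delta_decomposition_unique[OF n] own_base_unique nf unfolding is_right_nf_def by metis
next
  assume "A = A' \<and> m = m'"
  then show "sb_eq n W W'" using nf unfolding is_right_nf_def by (meson sb_eq_sym sb_eq_trans)
qed

lemma ex1_is_left_nf:
  assumes n: "2 \<le> n" and W: "valid_word n W"
  shows "\<exists>!p. is_left_nf n W (fst p) (snd p)"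
proof -
  obtain m A where A: "pos_valid n A" "Delta_not_left_div n A" "sb_eq n W (Delta_pow n m @ A)"
    using left_Delta_decomposition_reduced[OF n W] by blast
  obtain B where B: "pos_eq n A B" "is_own_base n B" using own_base_exists[OF A(1)] .
  have "is_left_nf n W m B"
    unfolding is_left_nf_def
    using A B pos_eq_pos_valid[OF B(1) A(1)] sb_eq_trans[OF A(3) sb_eq_append_left[OF sb_eq_of_pos_eq[OF B(1)]]]
      pos_eq_trans[OF B(1)]
    by (auto simp: pos_valid_def Delta_not_left_div_def)
  then show ?thesis using is_left_nf_eq_iff[OF n] by (metis fst_conv prod_eq_iff sb_eq_refl snd_conv)
qed

lemma ex1_is_right_nf:
  assumes n: "2 \<le> n" and W: "valid_word n W"
  shows "\<exists>!p. is_right_nf n W (fst p) (snd p)"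
proof -
  obtain m A where A: "pos_valid n A" "Delta_not_right_div n A" "sb_eq n W (A @ Delta_pow n m)"
    using right_Delta_decomposition_reduced[OF n W] by blast
  obtain B where B: "pos_eq n A B" "is_own_base n B" using own_base_exists[OF A(1)] .
  have "is_right_nf n W B m"
    unfolding is_right_nf_def
    using A B pos_eq_pos_valid[OF B(1) A(1)] sb_eq_trans[OF A(3) sb_eq_append_right[OF sb_eq_of_pos_eq[OF B(1)]]]
      pos_eq_trans[OF B(1)]
    by (auto simp: pos_valid_def Delta_not_right_div_def)
  then show ?thesis using is_right_nf_eq_iff[OF n] by (metis fst_conv prod_eq_iff sb_eq_refl snd_conv)
qed

theorem corollary2p3:
  fixes n :: nat
  assumes "n \<ge> 2"
  shows "(\<forall>W. valid_word n W \<longrightarrow> (\<exists>!p. is_left_nf n W (fst p) (snd p)))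
       \<and> (\<forall>W. valid_word n W \<longrightarrow> (\<exists>!p. is_right_nf n W (fst p) (snd p)))
       \<and> (\<forall>W1 W2. valid_word n W1 \<and> valid_word n W2 \<longrightarrow>
            (sb_eq n W1 W2 \<longleftrightarrow> left_nf n W1 = left_nf n W2))
       \<and> (\<forall>W1 W2. valid_word n W1 \<and> valid_word n W2 \<longrightarrow>
            (sb_eq n W1 W2 \<longleftrightarrow> right_nf n W1 = right_nf n W2))"
proof -
  have n: "2 \<le> n" using assms by simp
  have "sb_eq n W1 W2 \<longleftrightarrow> left_nf n W1 = left_nf n W2"
    if "valid_word n W1" "valid_word n W2" for W1 W2
    using is_left_nf_eq_iff[OF n theI'[OF ex1_is_left_nf[OF n that(1)]] theI'[OF ex1_is_left_nf[OF n that(2)]]]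
    unfolding left_nf_def by (simp add: prod_eq_iff)
  moreover have "sb_eq n W1 W2 \<longleftrightarrow> right_nf n W1 = right_nf n W2"
    if "valid_word n W1" "valid_word n W2" for W1 W2
    using is_right_nf_eq_iff[OF n theI'[OF ex1_is_right_nf[OF n that(1)]] theI'[OF ex1_is_right_nf[OF n that(2)]]]
    unfolding right_nf_def by (simp add: prod_eq_iff)
  ultimately show ?thesis using ex1_is_left_nf[OF n] ex1_is_right_nf[OF n] by blast
qed

end
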